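(* Let $V$ be a finite set and $\mu\colon\binom V2\to\mathbb{Z}_+$ a starry sky function. Then $(\Delta_V)_\mu$ is homotopy equivalent to a single sphere.
   Context: $(\Delta_V)_\mu$ is the edge inflation of the full simplex on $V$: the poset of pairs $(I,c_I)$ with $\varnothing\neq I\subseteq V$ and $c_I\colon\binom I2\to\mathbb{Z}_+$, $c_I(e)\in\{1,\dots,\mu(e)\}$, ordered by $(I,c_I)<(J,c_J)$ iff $I\subsetneq J$ and $c_I=c_J|_{\binom I2}$; topology refers to the realization of its order complex. $G(\mu)$ is the simple graph on $V$ whose edges are the pairs $e$ with $\mu(e)>1$. $\mu$ is a starry sky function if $\mu(e)\leqslant2$ for all $e$ and every connected component of $G(\mu)$ is isomorphic to a star graph with at least $2$ vertices. *)

theory Defs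
  imports "HOL-Analysis.Analysis"
begin

definition pairs2 :: "'v set \<Rightarrow> 'v set set" where
  "pairs2 I = {e. e \<subseteq> I \<and> card e = 2}"

definition Gmu_adj :: "'v set \<Rightarrow> ('v set \<Rightarrow> nat) \<Rightarrow> 'v \<Rightarrow> 'v \<Rightarrow> bool" where
  "Gmu_adj V \<mu> u v \<longleftrightarrow> u \<in> V \<and> v \<in> V \<and> u \<noteq> v \<and> \<mu> {u, v} > 1"

definition Gmu_components :: "'v set \<Rightarrow> ('v set \<Rightarrow> nat) \<Rightarrow> 'v set set" where
  "Gmu_components V \<mu> = (\<lambda>v. {w. (Gmu_adj V \<mu>)\<^sup>*\<^sup>* v w}) ` V"

definition is_star_component :: "'v set \<Rightarrow> ('v set \<Rightarrow> nat) \<Rightarrow> 'v set \<Rightarrow> bool" where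
  "is_star_component V \<mu> C \<longleftrightarrow> 2 \<le> card C \<and>
     (\<exists>c\<in>C. \<forall>u\<in>C. \<forall>v\<in>C. Gmu_adj V \<mu> u v \<longleftrightarrow> u \<noteq> v \<and> (u = c \<or> v = c))"

definition starry_sky :: "'v set \<Rightarrow> ('v set \<Rightarrow> nat) \<Rightarrow> bool" where
  "starry_sky V \<mu> \<longleftrightarrow> (\<forall>e\<in>pairs2 V. \<mu> e \<le> 2) \<and>
     (\<forall>C\<in>Gmu_components V \<mu>. is_star_component V \<mu> C)"

text \<open>Elements of the edge inflation (Delta_V)_mu: pairs (I, c_I); c_I is represented as a
  function on all sets, fixed to 0 outside the 2-subsets of I (canonical representative).\<close>
definition inflation :: "'v set \<Rightarrow> ('v set \<Rightarrow> nat) \<Rightarrow> ('v set \<times> ('v set \<Rightarrow> nat)) set" where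
  "inflation V \<mu> = {(I, c). I \<noteq> {} \<and> I \<subseteq> V \<and>
      (\<forall>e\<in>pairs2 I. 1 \<le> c e \<and> c e \<le> \<mu> e) \<and> (\<forall>e. e \<notin> pairs2 I \<longrightarrow> c e = 0)}"

definition inflation_less :: "('v set \<times> ('v set \<Rightarrow> nat)) \<Rightarrow> ('v set \<times> ('v set \<Rightarrow> nat)) \<Rightarrow> bool" where
  "inflation_less p q \<longleftrightarrow> fst p \<subset> fst q \<and> (\<forall>e\<in>pairs2 (fst p). snd p e = snd q e)"

definition order_complex_realization :: "'a set \<Rightarrow> ('a \<Rightarrow> 'a \<Rightarrow> bool) \<Rightarrow> ('a \<Rightarrow> real) topology" where
  "order_complex_realization P lt = subtopology (powertop_real UNIV)
     {x. (\<forall>p. 0 \<le> x p) \<and> {p. x p \<noteq> 0} \<subseteq> P \<and>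
         (\<forall>p\<in>{p. x p \<noteq> 0}. \<forall>q\<in>{p. x p \<noteq> 0}. p = q \<or> lt p q \<or> lt q p) \<and>
         sum x {p. x p \<noteq> 0} = 1}"

end

theory Submission
  imports Defs
begin

text \<open>
  For a starry sky function every vertex has a centre, the centre of its star component, and the
  edges of multiplicity 2 are exactly the spokes from the centres to the leaves. A cell \<open>(I, c)\<close>
  is a face \<open>I\<close> of the simplex together with a choice of one of two copies of each spoke in \<open>I\<close>.

  A point \<open>x\<close> of the order complex, a convex combination of a chain of cells, is sent to the
  coordinates \<open>t v\<close> (the sum of \<open>x p / card I\<close> over the cells containing \<open>v\<close>) and \<open>z b\<close> (the same
  sum over the cells containing the spoke of \<open>b\<close>, signed by the chosen copy). This identifies the
  order complex homeomorphically with the space of pairs \<open>(t, z)\<close>, \<open>t\<close> in the standard simplex and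
  \<open>\<bar>z b\<bar> = min (t (centre b)) (t b)\<close>, i.e. with the inflated simplex itself: the weight of a cell is
  recovered from the gap between the least coordinate on it and the largest coordinate off it.

  The inflated simplex is homotopy equivalent to the unit sphere in \<open>\<real>\<^sup>V\<close>, hence to a sphere of
  dimension \<open>card V - 1\<close>: it is mapped to the sphere by normalising the vector with entry
  \<open>t a - (\<Sum>b\<in>leaves a. t b)\<close> at a centre \<open>a\<close> and \<open>z b\<close> at a leaf \<open>b\<close>. A map back is built star by
  star; one composite is homotopic to the identity by an explicit deformation of the inflated simplex,
  the other by straight lines, since it moves no point of the sphere to its antipodal half-space.
\<close>

type_synonym 'v cell = "'v set \<times> ('v set \<Rightarrow> nat)"

definition supp :: "('a \<Rightarrow> real) \<Rightarrow> 'a set" where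
  "supp x = {p. x p \<noteq> 0}"

lemma topspace_order_complex_realization:
  "topspace (order_complex_realization P lt) =
     {x. (\<forall>p. 0 \<le> x p) \<and> supp x \<subseteq> P \<and>
         (\<forall>p\<in>supp x. \<forall>q\<in>supp x. p = q \<or> lt p q \<or> lt q p) \<and> sum x (supp x) = 1}"
  unfolding order_complex_realization_def supp_def by simp

lemma continuous_map_Min:
  fixes f :: "'i \<Rightarrow> 'a \<Rightarrow> real"
  assumes "finite K" "K \<noteq> {}" "\<And>i. i \<in> K \<Longrightarrow> continuous_map X euclideanreal (f i)"
  shows "continuous_map X euclideanreal (\<lambda>x. Min ((\<lambda>i. f i x) ` K))"
proof -
  have "(\<lambda>x. Min ((\<lambda>i. f i x) ` K)) = (\<lambda>x. INF i\<in>K. f i x)"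
    using assms(1,2) by (simp add: cInf_eq_Min)
  then show ?thesis
    using continuous_map_Inf[of K X "\<lambda>x i. f i x"] assms by simp
qed

lemma continuous_map_Max:
  fixes f :: "'i \<Rightarrow> 'a \<Rightarrow> real"
  assumes "finite K" "K \<noteq> {}" "\<And>i. i \<in> K \<Longrightarrow> continuous_map X euclideanreal (f i)"
  shows "continuous_map X euclideanreal (\<lambda>x. Max ((\<lambda>i. f i x) ` K))"
proof -
  have "(\<lambda>x. Max ((\<lambda>i. f i x) ` K)) = (\<lambda>x. SUP i\<in>K. f i x)"
    using assms(1,2) by (simp add: cSup_eq_Max)
  then show ?thesis
    using continuous_map_Sup[of K X "\<lambda>x i. f i x"] assms by simp
qed

lemma subset_chain_point_outside_proper_subsets:
  assumes "finite \<C>" "subset.chain UNIV \<C>" "J \<noteq> {}"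
  shows "\<exists>v\<in>J. \<forall>A\<in>\<C>. v \<in> A \<longrightarrow> \<not> A \<subset> J"
proof (cases "{A\<in>\<C>. A \<subset> J} = {}")
  case True
  then show ?thesis using assms(3) by blast
next
  case False
  have "subset.chain UNIV {A\<in>\<C>. A \<subset> J}"
    using assms(2) by (auto simp: subset_chain_def)
  moreover have "finite {A\<in>\<C>. A \<subset> J}" using assms(1) by simp
  ultimately have "\<Union>{A\<in>\<C>. A \<subset> J} \<in> {A\<in>\<C>. A \<subset> J}"
    using Union_in_chain[OF _ False] by blast
  then obtain v where "v \<in> J" "v \<notin> \<Union>{A\<in>\<C>. A \<subset> J}" by blast
  then show ?thesis by blast
qed

definition clamp :: "real \<Rightarrow> real \<Rightarrow> real" where
  "clamp z m = max (- m) (min m z)"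

lemma abs_clamp: "0 \<le> m \<Longrightarrow> m \<le> \<bar>z\<bar> \<Longrightarrow> \<bar>clamp z m\<bar> = m"
  unfolding clamp_def by (auto simp: max_def min_def)

lemma clamp_eq_self: "\<bar>z\<bar> = m \<Longrightarrow> clamp z m = z"
  unfolding clamp_def by (auto simp: max_def min_def)

lemma clamp_divide: "0 < c \<Longrightarrow> clamp (z / c) (m / c) = clamp z m / c"
  unfolding clamp_def by (simp add: max_divide_distrib_right min_divide_distrib_right)

lemma mult_clamp_nonneg: "0 \<le> m \<Longrightarrow> 0 \<le> z * clamp z m"
  unfolding clamp_def by (auto simp: max_def min_def zero_le_mult_iff)

lemma mult_clamp_pos: "0 < m \<Longrightarrow> z \<noteq> 0 \<Longrightarrow> 0 < z * clamp z m"
  unfolding clamp_def by (auto simp: max_def min_def zero_less_mult_iff)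

lemma continuous_map_clamp:
  "continuous_map X euclideanreal f \<Longrightarrow> continuous_map X euclideanreal g \<Longrightarrow>
   continuous_map X euclideanreal (\<lambda>x. clamp (f x) (g x))"
  unfolding clamp_def
  by (intro continuous_map_real_max continuous_map_real_min continuous_map_minus)

lemma square_le_centre_term:
  fixes a r m :: real
  assumes "0 \<le> r" "1 \<le> m"
  shows "a\<^sup>2 \<le> a * (max 0 (a + r) - r - m * max 0 (- a - r))"
proof (cases "0 \<le> a + r")
  case True
  then show ?thesis by (simp add: power2_eq_square)
next
  case False
  have "a * (0 - r - m * (- a - r)) - a\<^sup>2 = (m - 1) * ((- a) * (- (a + r)))"
    by (simp add: algebra_simps power2_eq_square)
  moreover have "0 \<le> (m - 1) * ((- a) * (- (a + r)))"
    using False assms by (intro mult_nonneg_nonneg) auto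
  ultimately show ?thesis using False by simp
qed

definition cell_chain :: "'v cell set \<Rightarrow> bool" where
  "cell_chain S \<longleftrightarrow> (\<forall>p\<in>S. \<forall>q\<in>S. p = q \<or> inflation_less p q \<or> inflation_less q p)"

lemma cell_chainD:
  "cell_chain S \<Longrightarrow> p \<in> S \<Longrightarrow> q \<in> S \<Longrightarrow> p = q \<or> inflation_less p q \<or> inflation_less q p"
  unfolding cell_chain_def by blast

lemma cell_chain_comparable:
  "cell_chain S \<Longrightarrow> p \<in> S \<Longrightarrow> q \<in> S \<Longrightarrow> fst p \<subseteq> fst q \<or> fst q \<subseteq> fst p"
  using cell_chainD[of S p q] unfolding inflation_less_def by auto

lemma cell_chain_subset_chain: "cell_chain S \<Longrightarrow> T \<subseteq> S \<Longrightarrow> subset.chain UNIV (fst ` T)"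
  unfolding subset_chain_def using cell_chain_comparable by blast

lemma cell_chain_fst_inj: "cell_chain S \<Longrightarrow> p \<in> S \<Longrightarrow> q \<in> S \<Longrightarrow> fst p = fst q \<Longrightarrow> p = q"
  using cell_chainD[of S p q] unfolding inflation_less_def by auto

lemma pairs2_mono: "A \<subseteq> B \<Longrightarrow> pairs2 A \<subseteq> pairs2 B"
  unfolding pairs2_def by auto

lemma cell_chain_colour_eq:
  assumes "cell_chain S" "p \<in> S" "q \<in> S" "e \<in> pairs2 (fst p)" "e \<in> pairs2 (fst q)"
  shows "snd p e = snd q e"
  using cell_chainD[OF assms(1-3)] assms(4,5) unfolding inflation_less_def by auto

section \<open>Unit spheres of finitely supported vectors\<close>

definition sqnorm :: "'v set \<Rightarrow> ('v \<Rightarrow> real) \<Rightarrow> real" where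
  "sqnorm V u = (\<Sum>v\<in>V. (u v)\<^sup>2)"

definition normalized :: "'v set \<Rightarrow> ('v \<Rightarrow> real) \<Rightarrow> 'v \<Rightarrow> real" where
  "normalized V u v = u v / sqrt (sqnorm V u)"

definition sphere_points :: "'v set \<Rightarrow> ('v \<Rightarrow> real) set" where
  "sphere_points V = {u. (\<forall>v. v \<notin> V \<longrightarrow> u v = 0) \<and> sqnorm V u = 1}"

definition sphere_top :: "'v set \<Rightarrow> ('v \<Rightarrow> real) topology" where
  "sphere_top V = subtopology (powertop_real UNIV) (sphere_points V)"

lemma topspace_sphere_top [simp]: "topspace (sphere_top V) = sphere_points V"
  unfolding sphere_top_def by simp

lemma sqnorm_pos: "finite V \<Longrightarrow> v \<in> V \<Longrightarrow> u v \<noteq> 0 \<Longrightarrow> 0 < sqnorm V u"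
  unfolding sqnorm_def by (intro sum_pos2) auto

lemma sqnorm_pos_iff:
  assumes "finite V"
  shows "0 < sqnorm V u \<longleftrightarrow> (\<exists>v\<in>V. u v \<noteq> 0)"
proof
  assume pos: "0 < sqnorm V u"
  show "\<exists>v\<in>V. u v \<noteq> 0"
  proof (rule ccontr)
    assume "\<not> (\<exists>v\<in>V. u v \<noteq> 0)"
    then have "sqnorm V u = 0" by (simp add: sqnorm_def)
    with pos show False by simp
  qed
next
  assume "\<exists>v\<in>V. u v \<noteq> 0"
  then obtain v where "v \<in> V" "u v \<noteq> 0" by blast
  then show "0 < sqnorm V u" by (rule sqnorm_pos[OF assms])
qed

lemma sphere_points_nonzero: "finite V \<Longrightarrow> u \<in> sphere_points V \<Longrightarrow> \<exists>v\<in>V. u v \<noteq> 0"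
  using sqnorm_pos_iff[of V u] by (simp add: sphere_points_def)

lemma sqnorm_normalized:
  assumes "0 < sqnorm V u"
  shows "sqnorm V (normalized V u) = 1"
proof -
  have "sqnorm V (normalized V u) = (\<Sum>v\<in>V. (u v)\<^sup>2 / sqnorm V u)"
    unfolding sqnorm_def[of V "normalized V u"] normalized_def
    using assms by (simp add: power_divide)
  also have "\<dots> = sqnorm V u / sqnorm V u"
    by (simp only: sqnorm_def sum_divide_distrib)
  finally show ?thesis using assms by simp
qed

lemma normalized_in_sphere_points:
  assumes "0 < sqnorm V u" "\<And>v. v \<notin> V \<Longrightarrow> u v = 0"
  shows "normalized V u \<in> sphere_points V"
proof -
  have "normalized V u v = 0" if "v \<notin> V" for v
    using assms(2)[OF that] by (simp add: normalized_def)
  then show ?thesis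
    unfolding sphere_points_def using sqnorm_normalized[OF assms(1)] by blast
qed

lemma normalized_eq_self: "sqnorm V u = 1 \<Longrightarrow> normalized V u = u"
  unfolding normalized_def by (simp add: fun_eq_iff)

lemma continuous_map_sphere_top_projection: "continuous_map (sphere_top V) euclideanreal (\<lambda>u. u v)"
  unfolding sphere_top_def
  by (rule continuous_map_from_subtopology[OF continuous_map_product_projection]) simp

lemma continuous_map_into_sphere_top:
  "(\<And>v. continuous_map T euclideanreal (\<lambda>x. f x v)) \<Longrightarrow>
   (\<And>x. x \<in> topspace T \<Longrightarrow> f x \<in> sphere_points V) \<Longrightarrow> continuous_map T (sphere_top V) f"
  unfolding sphere_top_def continuous_map_in_subtopology continuous_map_componentwise_UNIV
  by blast

lemma continuous_map_normalized:
  assumes "finite V" "\<And>v. continuous_map T euclideanreal (\<lambda>x. f x v)"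
    "\<And>x. x \<in> topspace T \<Longrightarrow> 0 < sqnorm V (f x)"
  shows "continuous_map T euclideanreal (\<lambda>x. normalized V (f x) v)"
proof -
  have "sqrt (\<Sum>v\<in>V. (f x v)\<^sup>2) \<noteq> 0" if "x \<in> topspace T" for x
    using assms(3)[OF that] unfolding sqnorm_def by simp
  then show ?thesis
    unfolding normalized_def sqnorm_def
    by (intro continuous_map_real_divide continuous_map_sqrt continuous_map_sum continuous_map_real_pow
        assms(1,2))
qed

lemma homotopic_with_trueI:
  assumes "continuous_map (prod_topology (top_of_set {0..1::real}) X) Y h"
    "\<And>x. x \<in> topspace X \<Longrightarrow> h (0, x) = p x" "\<And>x. x \<in> topspace X \<Longrightarrow> h (1, x) = q x"
  shows "homotopic_with (\<lambda>_. True) X Y p q"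
  using assms by (subst homotopic_with) (simp, blast)

lemma sqnorm_segment_pos:
  assumes V: "finite V" and u: "u \<in> sphere_points V" and pos: "0 < (\<Sum>v\<in>V. w v * u v)"
    and s: "0 \<le> s" "s \<le> 1"
  shows "0 < sqnorm V (\<lambda>v. (1 - s) * w v + s * u v)"
proof (rule ccontr)
  have "(\<Sum>v\<in>V. u v * u v) = 1"
    using u unfolding sphere_points_def sqnorm_def by (simp add: power2_eq_square)
  moreover have "(\<Sum>v\<in>V. ((1 - s) * w v + s * u v) * u v) =
      (1 - s) * (\<Sum>v\<in>V. w v * u v) + s * (\<Sum>v\<in>V. u v * u v)"
    by (simp add: distrib_right sum.distrib sum_distrib_left mult.assoc)
  ultimately have "(\<Sum>v\<in>V. ((1 - s) * w v + s * u v) * u v) = (1 - s) * (\<Sum>v\<in>V. w v * u v) + s"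
    by simp
  also have "\<dots> > 0"
    using pos s by (cases "s = 1") (auto intro: add_pos_nonneg)
  finally have inner_pos: "0 < (\<Sum>v\<in>V. ((1 - s) * w v + s * u v) * u v)" .
  assume "\<not> 0 < sqnorm V (\<lambda>v. (1 - s) * w v + s * u v)"
  then have "\<forall>v\<in>V. (1 - s) * w v + s * u v = 0" using sqnorm_pos_iff[OF V] by blast
  with inner_pos show False by simp
qed

text \<open>The segment from \<open>f u\<close> to \<open>u\<close> avoids the origin and can be pushed radially onto the sphere.\<close>

lemma sphere_map_homotopic_id:
  fixes f :: "('v \<Rightarrow> real) \<Rightarrow> 'v \<Rightarrow> real"
  assumes V: "finite V" and f: "continuous_map (sphere_top V) (sphere_top V) f"
    and pos: "\<And>u. u \<in> sphere_points V \<Longrightarrow> 0 < (\<Sum>v\<in>V. f u v * u v)"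
  shows "homotopic_with (\<lambda>_. True) (sphere_top V) (sphere_top V) f id"
proof -
  define seg where "seg z = (\<lambda>v. (1 - fst z) * f (snd z) v + fst z * snd z v)" for z
  let ?T = "prod_topology (top_of_set {0..1::real}) (sphere_top V)"
  have fu: "f u \<in> sphere_points V" if "u \<in> sphere_points V" for u
    using f that continuous_map_image_subset_topspace by fastforce
  have seg_pos: "0 < sqnorm V (seg z)" if "z \<in> topspace ?T" for z
    using that sqnorm_segment_pos[OF V _ pos] unfolding seg_def by auto
  have seg_cont: "continuous_map ?T euclideanreal (\<lambda>z. seg z v)" for v
  proof -
    have "continuous_map (sphere_top V) euclideanreal (\<lambda>u. f u v)"
      using continuous_map_compose[OF f continuous_map_sphere_top_projection] by (simp add: o_def)
    then show ?thesis
      unfolding seg_def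
      by (intro continuous_map_add continuous_map_real_mult continuous_map_diff
          continuous_map_canonical_const continuous_map_compose[OF continuous_map_snd, unfolded o_def]
          continuous_map_into_fulltopology[OF continuous_map_fst]
          continuous_map_sphere_top_projection)
  qed
  have "continuous_map ?T (sphere_top V) (\<lambda>z. normalized V (seg z))"
  proof (rule continuous_map_into_sphere_top)
    show "continuous_map ?T euclideanreal (\<lambda>z. normalized V (seg z) v)" for v
      by (rule continuous_map_normalized[OF V seg_cont seg_pos])
    fix z assume z: "z \<in> topspace ?T"
    then have "snd z \<in> sphere_points V" "f (snd z) \<in> sphere_points V"
      using fu by auto
    then have "seg z v = 0" if "v \<notin> V" for v
      using that unfolding seg_def sphere_points_def by simp
    then show "normalized V (seg z) \<in> sphere_points V"
      using normalized_in_sphere_points[OF seg_pos[OF z]] by blast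
  qed
  moreover have "normalized V (seg (0, u)) = f u" if "u \<in> sphere_points V" for u
    using fu[OF that] normalized_eq_self unfolding seg_def sphere_points_def by auto
  moreover have "normalized V (seg (1, u)) = u" if "u \<in> sphere_points V" for u
    using that normalized_eq_self unfolding seg_def sphere_points_def by auto
  ultimately show ?thesis
    by (intro homotopic_with_trueI[where h = "\<lambda>z. normalized V (seg z)"]) auto
qed

lemma sqnorm_reindex: "bij_betw \<nu> {..<n} V \<Longrightarrow> sqnorm V u = (\<Sum>i<n. (u (\<nu> i))\<^sup>2)"
  unfolding sqnorm_def using sum.reindex_bij_betw[of \<nu> "{..<n}" V "\<lambda>v. (u v)\<^sup>2"] by simp

lemma sphere_top_homeomorphic_nsphere:
  assumes V: "finite V" "V \<noteq> {}"
  shows "sphere_top V homeomorphic_space nsphere (card V - 1)"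
proof -
  define n where "n = card V"
  have n: "0 < n" unfolding n_def using V by (simp add: card_gt_0_iff)
  obtain \<nu> where \<nu>: "bij_betw \<nu> {..<n} V"
    unfolding n_def using ex_bij_betw_nat_finite[OF V(1)] by (auto simp: atLeast0LessThan)
  define \<iota> where "\<iota> = inv_into {..<n} \<nu>"
  have \<iota>: "bij_betw \<iota> V {..<n}" unfolding \<iota>_def using bij_betw_inv_into[OF \<nu>] .
  have \<nu>_\<iota>: "\<nu> (\<iota> v) = v" if "v \<in> V" for v
    unfolding \<iota>_def using \<nu> that by (simp add: bij_betw_def f_inv_into_f)
  have \<iota>_\<nu>: "\<iota> (\<nu> i) = i" if "i < n" for i
    unfolding \<iota>_def using \<nu> that by (simp add: bij_betw_def inv_into_f_f)
  define Sph where "Sph = {x::nat \<Rightarrow> real. (\<Sum>i\<le>n - 1. (x i)\<^sup>2) = 1 \<and> (\<forall>i>n - 1. x i = 0)}"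
  have nsph: "nsphere (card V - 1) = subtopology (powertop_real UNIV) Sph"
    unfolding Sph_def n_def by (rule nsphere)
  have atMost_eq: "{..n - 1} = {..<n}" and above_iff: "\<And>i. n - 1 < i \<longleftrightarrow> n \<le> i"
    using n by auto
  define \<phi> where "\<phi> u = (\<lambda>i. if i < n then u (\<nu> i) else (0::real))" for u
  define \<psi> where "\<psi> x = (\<lambda>v. if v \<in> V then x (\<iota> v) else (0::real))" for x
  have \<phi>_in: "\<phi> u \<in> Sph" if "u \<in> sphere_points V" for u
    using that sqnorm_reindex[OF \<nu>, of u] unfolding Sph_def sphere_points_def \<phi>_def atMost_eq above_iff
    by auto
  have \<psi>_in: "\<psi> x \<in> sphere_points V" if "x \<in> Sph" for x
  proof -
    have "(\<Sum>i<n. (\<psi> x (\<nu> i))\<^sup>2) = (\<Sum>i<n. (x i)\<^sup>2)"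
      using \<nu> \<iota>_\<nu> unfolding \<psi>_def bij_betw_def by (intro sum.cong) auto
    then show ?thesis
      using that sqnorm_reindex[OF \<nu>, of "\<psi> x"] unfolding Sph_def sphere_points_def atMost_eq
      by (simp add: \<psi>_def)
  qed
  have "homeomorphic_maps (sphere_top V) (subtopology (powertop_real UNIV) Sph) \<phi> \<psi>"
    unfolding homeomorphic_maps_def
  proof (intro conjI ballI)
    show "continuous_map (sphere_top V) (subtopology (powertop_real UNIV) Sph) \<phi>"
      unfolding continuous_map_in_subtopology continuous_map_componentwise_UNIV \<phi>_def
      using \<phi>_in[unfolded \<phi>_def]
      by (auto simp: continuous_map_sphere_top_projection)
    show "continuous_map (subtopology (powertop_real UNIV) Sph) (sphere_top V) \<psi>"
      unfolding \<psi>_def using \<psi>_in[unfolded \<psi>_def]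
      by (intro continuous_map_into_sphere_top)
         (auto intro: continuous_map_from_subtopology[OF continuous_map_product_projection])
  next
    fix u assume "u \<in> topspace (sphere_top V)"
    then have "\<forall>v. v \<notin> V \<longrightarrow> u v = 0" by (simp add: sphere_points_def)
    then show "\<psi> (\<phi> u) = u"
      using \<iota> \<nu>_\<iota> unfolding \<psi>_def \<phi>_def bij_betw_def by (auto simp: fun_eq_iff)
  next
    fix x assume "x \<in> topspace (subtopology (powertop_real UNIV) Sph)"
    then show "\<phi> (\<psi> x) = x"
      using \<nu> \<iota>_\<nu> unfolding \<psi>_def \<phi>_def Sph_def above_iff bij_betw_def by (auto simp: fun_eq_iff)
  qed
  then show ?thesis unfolding nsph homeomorphic_space_def by blast
qed

section \<open>Star forests and the inflated simplex\<close>

locale star_forest =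
  fixes V :: "'v set" and \<mu> :: "'v set \<Rightarrow> nat" and centre :: "'v \<Rightarrow> 'v"
  assumes finite_V: "finite V"
    and centre_in_V: "\<And>v. v \<in> V \<Longrightarrow> centre v \<in> V"
    and centre_centre: "\<And>v. v \<in> V \<Longrightarrow> centre (centre v) = centre v"
    and centre_has_leaf: "\<And>a. a \<in> V \<Longrightarrow> centre a = a \<Longrightarrow> \<exists>b\<in>V. centre b = a \<and> b \<noteq> a"
    and multiplicity_bounds: "\<And>e. e \<in> pairs2 V \<Longrightarrow> 1 \<le> \<mu> e \<and> \<mu> e \<le> 2"
    and multiplicity_gt_1_iff:
      "\<And>e. e \<in> pairs2 V \<Longrightarrow> 1 < \<mu> e \<longleftrightarrow> (\<exists>b\<in>V. centre b \<noteq> b \<and> e = {centre b, b})"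
begin

abbreviation cells :: "'v cell set" where
  "cells \<equiv> inflation V \<mu>"

abbreviation realization :: "('v cell \<Rightarrow> real) topology" where
  "realization \<equiv> order_complex_realization cells inflation_less"

definition leaf :: "'v \<Rightarrow> bool" where
  "leaf b \<longleftrightarrow> b \<in> V \<and> centre b \<noteq> b"

definition spoke :: "'v \<Rightarrow> 'v set" where
  "spoke b = {centre b, b}"

definition leaves :: "'v \<Rightarrow> 'v set" where
  "leaves a = {b\<in>V. centre b = a \<and> b \<noteq> a}"

definition spoke_sign :: "('v set \<Rightarrow> nat) \<Rightarrow> 'v \<Rightarrow> real" where
  "spoke_sign c b = (if c (spoke b) = 1 then 1 else -1)"

lemma spoke_sign_square: "spoke_sign c b * spoke_sign c b = 1"
  by (simp add: spoke_sign_def)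

lemma abs_spoke_sign [simp]: "\<bar>spoke_sign c b\<bar> = 1"
  by (simp add: spoke_sign_def)

lemma leafD: "leaf b \<Longrightarrow> b \<in> V \<and> centre b \<in> V \<and> centre b \<noteq> b"
  unfolding leaf_def using centre_in_V by auto

lemma centre_of_leaf: "leaf b \<Longrightarrow> centre b \<in> V \<and> centre (centre b) = centre b"
  using leafD centre_centre by blast

lemma spoke_in_pairs2: "leaf b \<Longrightarrow> spoke b \<subseteq> I \<Longrightarrow> spoke b \<in> pairs2 I"
  unfolding pairs2_def spoke_def leaf_def by auto

lemma multiplicity_spoke: "leaf b \<Longrightarrow> \<mu> (spoke b) = 2"
proof -
  assume b: "leaf b"
  have e: "spoke b \<in> pairs2 V" using spoke_in_pairs2[OF b] leafD[OF b] by (simp add: spoke_def)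
  have "1 < \<mu> (spoke b)" using multiplicity_gt_1_iff[OF e] b unfolding leaf_def spoke_def by blast
  then show ?thesis using multiplicity_bounds[OF e] by simp
qed

lemma spoke_inj: "leaf b \<Longrightarrow> leaf b' \<Longrightarrow> spoke b = spoke b' \<Longrightarrow> b = b'"
  unfolding spoke_def doubleton_eq_iff leaf_def using centre_centre by metis

lemma finite_leaves: "finite (leaves a)"
  unfolding leaves_def using finite_V by simp

lemma in_leavesD: "b \<in> leaves a \<Longrightarrow> leaf b \<and> centre b = a"
  unfolding leaves_def leaf_def by auto

lemma leaf_in_leaves: "leaf b \<Longrightarrow> b \<in> leaves (centre b)"
  unfolding leaves_def leaf_def by auto

lemma card_leaves_ge_1: "a \<in> V \<Longrightarrow> centre a = a \<Longrightarrow> 1 \<le> real (card (leaves a))"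
  using centre_has_leaf[of a] finite_leaves[of a]
  by (auto simp: leaves_def Suc_le_eq card_gt_0_iff)

lemma cellsD:
  assumes "p \<in> cells"
  shows "fst p \<noteq> {}" "fst p \<subseteq> V" "\<And>e. e \<in> pairs2 (fst p) \<Longrightarrow> 1 \<le> snd p e \<and> snd p e \<le> \<mu> e"
    "\<And>e. e \<notin> pairs2 (fst p) \<Longrightarrow> snd p e = 0"
  using assms unfolding inflation_def by auto

lemma finite_cell: "p \<in> cells \<Longrightarrow> finite (fst p)"
  using cellsD(2) finite_V finite_subset by blast

lemma card_cell_pos: "p \<in> cells \<Longrightarrow> 0 < card (fst p)"
  using cellsD(1) finite_cell by (simp add: card_gt_0_iff)

lemma colour_off_spokes:
  assumes "p \<in> cells" "e \<in> pairs2 (fst p)" "\<not> (\<exists>b. leaf b \<and> e = spoke b)"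
  shows "snd p e = 1"
proof -
  have "e \<in> pairs2 V" using pairs2_mono[OF cellsD(2)[OF assms(1)]] assms(2) by blast
  then have "\<not> 1 < \<mu> e"
    using multiplicity_gt_1_iff assms(3) unfolding leaf_def spoke_def by blast
  then show ?thesis using cellsD(3)[OF assms(1,2)] by simp
qed

lemma colour_spoke:
  assumes "p \<in> cells" "leaf b" "spoke b \<subseteq> fst p"
  shows "snd p (spoke b) = 1 \<or> snd p (spoke b) = 2"
  using cellsD(3)[OF assms(1) spoke_in_pairs2[OF assms(2,3)]] multiplicity_spoke[OF assms(2)]
  by linarith

lemma finite_cells: "finite cells"
proof -
  define C where "C = {c. \<forall>e. (e \<in> pairs2 V \<longrightarrow> c e \<in> {0..2::nat}) \<and> (e \<notin> pairs2 V \<longrightarrow> c e = 0)}"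
  have "finite (pairs2 V)" unfolding pairs2_def using finite_V by simp
  then have "finite C"
    unfolding C_def using finite_set_of_finite_funs[of "pairs2 V" "{0..2::nat}" 0] by simp
  moreover have "cells \<subseteq> Pow V \<times> C"
  proof
    fix p assume p: "p \<in> cells"
    have "snd p e \<in> {0..2}" if "e \<in> pairs2 V" for e
      using cellsD(3,4)[OF p, of e] multiplicity_bounds[OF that] by force
    moreover have "snd p e = 0" if "e \<notin> pairs2 V" for e
      using cellsD(4)[OF p] pairs2_mono[OF cellsD(2)[OF p]] that by blast
    ultimately show "p \<in> Pow V \<times> C"
      using cellsD(2)[OF p] unfolding C_def by (cases p) auto
  qed
  ultimately show ?thesis using finite_V finite_subset by blast
qed

lemma realizationD:
  assumes "x \<in> topspace realization"
  shows "\<And>p. 0 \<le> x p" "supp x \<subseteq> cells" "cell_chain (supp x)" "sum x (supp x) = 1"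
  using assms unfolding topspace_order_complex_realization cell_chain_def by auto

lemma realizationI:
  "(\<And>p. 0 \<le> x p) \<Longrightarrow> supp x \<subseteq> cells \<Longrightarrow> cell_chain (supp x) \<Longrightarrow> sum x (supp x) = 1 \<Longrightarrow>
   x \<in> topspace realization"
  unfolding topspace_order_complex_realization cell_chain_def by simp

definition vertex_share :: "('v cell \<Rightarrow> real) \<Rightarrow> 'v cell \<Rightarrow> real" where
  "vertex_share x p = x p / real (card (fst p))"

definition vertex_coord :: "('v cell \<Rightarrow> real) \<Rightarrow> 'v \<Rightarrow> real" where
  "vertex_coord x v = (\<Sum>p\<in>{p\<in>cells. v \<in> fst p}. vertex_share x p)"

definition spoke_coord :: "('v cell \<Rightarrow> real) \<Rightarrow> 'v \<Rightarrow> real" where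
  "spoke_coord x b =
     (if leaf b then \<Sum>p\<in>{p\<in>cells. spoke b \<subseteq> fst p}. vertex_share x p * spoke_sign (snd p) b else 0)"

lemma vertex_share_nonneg: "(\<And>p. 0 \<le> x p) \<Longrightarrow> 0 \<le> vertex_share x p"
  unfolding vertex_share_def by simp

lemma vertex_coord_supp:
  assumes "supp x \<subseteq> cells"
  shows "vertex_coord x v = (\<Sum>p\<in>{p\<in>supp x. v \<in> fst p}. vertex_share x p)"
  unfolding vertex_coord_def
  by (rule sum.mono_neutral_right) (use assms finite_cells in \<open>auto simp: supp_def vertex_share_def\<close>)

lemma spoke_coord_supp:
  assumes "supp x \<subseteq> cells" "leaf b"
  shows "spoke_coord x b = (\<Sum>p\<in>{p\<in>supp x. spoke b \<subseteq> fst p}. vertex_share x p * spoke_sign (snd p) b)"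
proof -
  have "(\<Sum>p\<in>{p\<in>cells. spoke b \<subseteq> fst p}. vertex_share x p * spoke_sign (snd p) b) =
        (\<Sum>p\<in>{p\<in>supp x. spoke b \<subseteq> fst p}. vertex_share x p * spoke_sign (snd p) b)"
    by (rule sum.mono_neutral_right) (use assms finite_cells in \<open>auto simp: supp_def vertex_share_def\<close>)
  then show ?thesis unfolding spoke_coord_def using assms(2) by simp
qed

lemma sum_vertex_coord: "sum (vertex_coord x) V = sum x cells"
proof -
  have "sum (vertex_coord x) V = (\<Sum>p\<in>cells. \<Sum>v\<in>V. if v \<in> fst p then vertex_share x p else 0)"
    unfolding vertex_coord_def
    by (simp add: sum.inter_filter[OF finite_cells, symmetric] sum.swap[of _ V])
  also have "\<dots> = (\<Sum>p\<in>cells. x p)"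
  proof (rule sum.cong[OF refl])
    fix p assume p: "p \<in> cells"
    have "(\<Sum>v\<in>V. if v \<in> fst p then vertex_share x p else 0) = real (card (fst p)) * vertex_share x p"
      using cellsD(2)[OF p] finite_V by (simp add: sum.If_cases Int_absorb1)
    then show "(\<Sum>v\<in>V. if v \<in> fst p then vertex_share x p else 0) = x p"
      using card_cell_pos[OF p] by (simp add: vertex_share_def)
  qed
  finally show ?thesis .
qed

lemma vertex_share_add_cell:
  "vertex_share (\<lambda>p. x p + (if p = p0 then c else 0)) p =
   vertex_share x p + (if p = p0 then c / real (card (fst p0)) else 0)"
  unfolding vertex_share_def by (simp add: add_divide_distrib)

lemma vertex_coord_add_cell:
  "vertex_coord (\<lambda>p. x p + (if p = p0 then c else 0)) v =
   vertex_coord x v + (if p0 \<in> cells \<and> v \<in> fst p0 then c / real (card (fst p0)) else 0)"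
  unfolding vertex_coord_def vertex_share_add_cell sum.distrib
  using finite_cells by (simp add: sum.delta)

lemma spoke_coord_add_cell:
  "spoke_coord (\<lambda>p. x p + (if p = p0 then c else 0)) b =
   spoke_coord x b + (if leaf b \<and> p0 \<in> cells \<and> spoke b \<subseteq> fst p0
                      then c / real (card (fst p0)) * spoke_sign (snd p0) b else 0)"
proof -
  have "vertex_share (\<lambda>p. x p + (if p = p0 then c else 0)) p * spoke_sign (snd p) b =
        vertex_share x p * spoke_sign (snd p) b +
        (if p = p0 then c / real (card (fst p0)) * spoke_sign (snd p0) b else 0)" for p
    by (simp add: vertex_share_add_cell distrib_right)
  then show ?thesis
    unfolding spoke_coord_def using finite_cells by (simp add: sum.distrib sum.delta)
qed

text \<open>The sign of \<open>z b\<close> records on which of the two copies of the spoke of \<open>b\<close> a point lies;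
  the copies are glued where \<open>min (t (centre b)) (t b) = 0\<close>.\<close>

definition cone_point :: "('v \<Rightarrow> real) \<Rightarrow> ('v \<Rightarrow> real) \<Rightarrow> bool" where
  "cone_point t z \<longleftrightarrow> (\<forall>v. 0 \<le> t v) \<and> (\<forall>v. v \<notin> V \<longrightarrow> t v = 0) \<and>
     (\<forall>b. leaf b \<longrightarrow> \<bar>z b\<bar> = min (t (centre b)) (t b)) \<and> (\<forall>b. \<not> leaf b \<longrightarrow> z b = 0)"

definition inflated_points :: "(('v \<Rightarrow> real) \<times> ('v \<Rightarrow> real)) set" where
  "inflated_points = {(t, z). cone_point t z \<and> sum t V = 1}"

definition inflated_simplex :: "(('v \<Rightarrow> real) \<times> ('v \<Rightarrow> real)) topology" where
  "inflated_simplex = subtopology (prod_topology (powertop_real UNIV) (powertop_real UNIV)) inflated_points"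

lemma topspace_inflated_simplex [simp]: "topspace inflated_simplex = inflated_points"
  unfolding inflated_simplex_def by simp

lemma cone_pointD:
  assumes "cone_point t z"
  shows "\<And>v. 0 \<le> t v" "\<And>v. v \<notin> V \<Longrightarrow> t v = 0"
    "\<And>b. leaf b \<Longrightarrow> \<bar>z b\<bar> = min (t (centre b)) (t b)" "\<And>b. \<not> leaf b \<Longrightarrow> z b = 0"
  using assms unfolding cone_point_def by auto

lemma inflated_pointsD:
  assumes "y \<in> inflated_points"
  shows "cone_point (fst y) (snd y)" "sum (fst y) V = 1"
  using assms unfolding inflated_points_def by auto

lemma cone_point_divide:
  assumes "cone_point t z" "0 < c"
  shows "cone_point (\<lambda>v. t v / c) (\<lambda>v. z v / c)"
  using assms unfolding cone_point_def by (auto simp: min_divide_distrib_right)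

lemma inflated_points_normalize:
  assumes "cone_point t z" "0 < sum t V"
  shows "(\<lambda>v. t v / sum t V, \<lambda>v. z v / sum t V) \<in> inflated_points"
  using cone_point_divide[OF assms] assms(2)
  unfolding inflated_points_def by (simp add: sum_divide_distrib[symmetric])

section \<open>The order complex is homeomorphic to the inflated simplex\<close>

definition lower_level :: "('v \<Rightarrow> real) \<Rightarrow> ('v \<Rightarrow> real) \<Rightarrow> 'v cell \<Rightarrow> real" where
  "lower_level t z p =
     Min (t ` fst p \<union> (\<lambda>b. spoke_sign (snd p) b * z b) ` {b. leaf b \<and> spoke b \<subseteq> fst p})"

definition upper_level :: "('v \<Rightarrow> real) \<Rightarrow> 'v cell \<Rightarrow> real" where
  "upper_level t p = Max (insert 0 (t ` (V - fst p)))"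

text \<open>At a cell \<open>q\<close> of the chain carrying \<open>x\<close>, the lower level of the coordinates of \<open>x\<close> is the
  total share of the chain cells containing \<open>q\<close> and the upper level that of the cells strictly
  containing \<open>q\<close>; their difference is the share of \<open>q\<close> itself.\<close>

definition cell_weight :: "('v \<Rightarrow> real) \<Rightarrow> ('v \<Rightarrow> real) \<Rightarrow> 'v cell \<Rightarrow> real" where
  "cell_weight t z p =
     (if p \<in> cells then real (card (fst p)) * max 0 (lower_level t z p - upper_level t p) else 0)"

lemma finite_spokes_in: "finite {b. leaf b \<and> spoke b \<subseteq> I}"
  using finite_V by (rule finite_subset[rotated]) (auto simp: leaf_def)

lemma lower_level_le_vertex: "p \<in> cells \<Longrightarrow> v \<in> fst p \<Longrightarrow> lower_level t z p \<le> t v"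
  unfolding lower_level_def using finite_cell finite_spokes_in by (intro Min_le) auto

lemma lower_level_le_spoke:
  "p \<in> cells \<Longrightarrow> leaf b \<Longrightarrow> spoke b \<subseteq> fst p \<Longrightarrow> lower_level t z p \<le> spoke_sign (snd p) b * z b"
  unfolding lower_level_def using finite_cell finite_spokes_in by (intro Min_le) auto

lemma lower_level_greatest:
  assumes "p \<in> cells" "\<And>v. v \<in> fst p \<Longrightarrow> c \<le> t v"
    "\<And>b. leaf b \<Longrightarrow> spoke b \<subseteq> fst p \<Longrightarrow> c \<le> spoke_sign (snd p) b * z b"
  shows "c \<le> lower_level t z p"
  unfolding lower_level_def using assms finite_cell[OF assms(1)] finite_spokes_in cellsD(1)[OF assms(1)]
  by (subst Min_ge_iff) auto

lemma upper_level_ge_vertex: "v \<in> V \<Longrightarrow> v \<notin> fst p \<Longrightarrow> t v \<le> upper_level t p"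
  unfolding upper_level_def using finite_V by (intro Max_ge) auto

lemma upper_level_nonneg: "0 \<le> upper_level t p"
  unfolding upper_level_def using finite_V by (intro Max_ge) auto

lemma upper_level_least:
  "0 \<le> c \<Longrightarrow> (\<And>v. v \<in> V \<Longrightarrow> v \<notin> fst p \<Longrightarrow> t v \<le> c) \<Longrightarrow> upper_level t p \<le> c"
  unfolding upper_level_def using finite_V by (subst Max_le_iff) auto

context
  fixes x :: "'v cell \<Rightarrow> real"
  assumes x: "x \<in> topspace realization"
begin

lemma supp_subset_cells: "supp x \<subseteq> cells"
  using realizationD(2)[OF x] .

lemma finite_supp: "finite (supp x)"
  using finite_subset[OF supp_subset_cells finite_cells] .

lemma chain_supp: "cell_chain (supp x)"
  using realizationD(3)[OF x] .

lemma share_nonneg: "0 \<le> vertex_share x p"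
  using vertex_share_nonneg realizationD(1)[OF x] by blast

lemma share_sum_mono:
  "A \<subseteq> B \<Longrightarrow> B \<subseteq> supp x \<Longrightarrow> sum (vertex_share x) A \<le> sum (vertex_share x) B"
  using finite_supp share_nonneg by (intro sum_mono2) (auto intro: finite_subset)

lemma vertex_coord_chain: "vertex_coord x v = sum (vertex_share x) {p\<in>supp x. v \<in> fst p}"
  using vertex_coord_supp[OF supp_subset_cells] .

lemma spoke_coord_chain:
  assumes "leaf b" "p \<in> supp x" "spoke b \<subseteq> fst p"
  shows "spoke_coord x b = spoke_sign (snd p) b * sum (vertex_share x) {q\<in>supp x. spoke b \<subseteq> fst q}"
proof -
  have "spoke_coord x b = (\<Sum>q\<in>{q\<in>supp x. spoke b \<subseteq> fst q}. vertex_share x q * spoke_sign (snd p) b)"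
    unfolding spoke_coord_supp[OF supp_subset_cells assms(1)]
  proof (rule sum.cong[OF refl])
    fix q assume "q \<in> {q\<in>supp x. spoke b \<subseteq> fst q}"
    then have "snd q (spoke b) = snd p (spoke b)"
      using cell_chain_colour_eq[OF chain_supp] spoke_in_pairs2[OF assms(1)] assms(2,3) by blast
    then show "vertex_share x q * spoke_sign (snd q) b = vertex_share x q * spoke_sign (snd p) b"
      unfolding spoke_sign_def by simp
  qed
  then show ?thesis by (simp add: sum_distrib_left mult.commute)
qed

lemma abs_spoke_coord:
  assumes "leaf b"
  shows "\<bar>spoke_coord x b\<bar> = sum (vertex_share x) {q\<in>supp x. spoke b \<subseteq> fst q}"
proof (cases "{q\<in>supp x. spoke b \<subseteq> fst q} = {}")
  case True
  then show ?thesis unfolding spoke_coord_supp[OF supp_subset_cells assms] True by simp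
next
  case False
  then obtain p where "p \<in> supp x" "spoke b \<subseteq> fst p" by blast
  then show ?thesis
    using spoke_coord_chain[OF assms] share_nonneg by (simp add: abs_mult sum_nonneg)
qed

lemma spoke_share_eq_min:
  assumes "leaf b"
  shows "sum (vertex_share x) {q\<in>supp x. spoke b \<subseteq> fst q} =
         min (vertex_coord x (centre b)) (vertex_coord x b)"
proof -
  define A where "A = {p\<in>supp x. centre b \<in> fst p}"
  define B where "B = {p\<in>supp x. b \<in> fst p}"
  have AB: "{q\<in>supp x. spoke b \<subseteq> fst q} = A \<inter> B"
    unfolding A_def B_def spoke_def by blast
  have "A \<subseteq> B \<or> B \<subseteq> A"
  proof (rule ccontr)
    assume "\<not> (A \<subseteq> B \<or> B \<subseteq> A)"
    then obtain p q where "p \<in> A" "p \<notin> B" "q \<in> B" "q \<notin> A" by blast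
    then show False
      using cell_chain_comparable[OF chain_supp, of p q] unfolding A_def B_def by blast
  qed
  moreover have "A \<subseteq> supp x" "B \<subseteq> supp x" unfolding A_def B_def by auto
  moreover have "vertex_coord x (centre b) = sum (vertex_share x) A" "vertex_coord x b = sum (vertex_share x) B"
    unfolding A_def B_def vertex_coord_chain by simp_all
  ultimately show ?thesis
    unfolding AB using share_sum_mono by (auto simp: Int_absorb1 Int_absorb2 min_def dest: antisym)
qed

lemma coords_in_inflated_points: "(vertex_coord x, spoke_coord x) \<in> inflated_points"
proof -
  have "cone_point (vertex_coord x) (spoke_coord x)"
    unfolding cone_point_def
  proof (intro conjI allI impI)
    show "0 \<le> vertex_coord x v" for v
      unfolding vertex_coord_chain using share_nonneg by (simp add: sum_nonneg)
    show "vertex_coord x v = 0" if "v \<notin> V" for v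
      unfolding vertex_coord_chain using that cellsD(2) supp_subset_cells by (force intro: sum.neutral)
    show "\<bar>spoke_coord x b\<bar> = min (vertex_coord x (centre b)) (vertex_coord x b)" if "leaf b" for b
      using abs_spoke_coord[OF that] spoke_share_eq_min[OF that] by simp
    show "spoke_coord x b = 0" if "\<not> leaf b" for b
      using that by (simp add: spoke_coord_def)
  qed
  moreover have "sum (vertex_coord x) V = 1"
  proof -
    have "sum x cells = sum x (supp x)"
      by (rule sum.mono_neutral_right[OF finite_cells supp_subset_cells]) (auto simp: supp_def)
    then show ?thesis using sum_vertex_coord realizationD(4)[OF x] by simp
  qed
  ultimately show ?thesis unfolding inflated_points_def by simp
qed

lemma exists_vertex_outside_smaller_cells:
  assumes "J \<noteq> {}"
  shows "\<exists>v\<in>J. \<forall>p\<in>supp x. v \<in> fst p \<longrightarrow> \<not> fst p \<subset> J"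
proof -
  obtain v where "v \<in> J" "\<forall>A\<in>fst ` supp x. v \<in> A \<longrightarrow> \<not> A \<subset> J"
    using subset_chain_point_outside_proper_subsets[OF finite_imageI[OF finite_supp]
        cell_chain_subset_chain[OF chain_supp subset_refl] assms] by blast
  then show ?thesis by auto
qed

lemma least_cell:
  assumes "T \<subseteq> supp x" "T \<noteq> {}"
  obtains p where "p \<in> T" "\<And>q. q \<in> T \<Longrightarrow> fst p \<subseteq> fst q"
proof -
  have "\<Inter>(fst ` T) \<in> fst ` T"
    using Inter_in_chain[OF _ _ cell_chain_subset_chain[OF chain_supp assms(1)]]
      finite_subset[OF assms(1) finite_supp] assms(2) by simp
  then obtain p where "p \<in> T" "fst p = \<Inter>(fst ` T)" by auto
  then show ?thesis using that[of p] by auto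
qed

lemma lower_level_chain_cell:
  assumes q: "q \<in> supp x"
  shows "lower_level (vertex_coord x) (spoke_coord x) q = sum (vertex_share x) {p\<in>supp x. fst q \<subseteq> fst p}"
proof (rule antisym)
  have q_cell: "q \<in> cells" using q supp_subset_cells by blast
  obtain v where v: "v \<in> fst q" "\<forall>p\<in>supp x. v \<in> fst p \<longrightarrow> \<not> fst p \<subset> fst q"
    using exists_vertex_outside_smaller_cells cellsD(1)[OF q_cell] by blast
  have "{p\<in>supp x. v \<in> fst p} = {p\<in>supp x. fst q \<subseteq> fst p}"
    using cell_chain_comparable[OF chain_supp _ q] v by blast
  then have "vertex_coord x v = sum (vertex_share x) {p\<in>supp x. fst q \<subseteq> fst p}"
    by (simp only: vertex_coord_chain)
  then show "lower_level (vertex_coord x) (spoke_coord x) q \<le> sum (vertex_share x) {p\<in>supp x. fst q \<subseteq> fst p}"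
    using lower_level_le_vertex[OF q_cell v(1), where t = "vertex_coord x" and z = "spoke_coord x"] by simp
  show "sum (vertex_share x) {p\<in>supp x. fst q \<subseteq> fst p} \<le> lower_level (vertex_coord x) (spoke_coord x) q"
  proof (rule lower_level_greatest[OF q_cell])
    fix v assume "v \<in> fst q"
    then show "sum (vertex_share x) {p\<in>supp x. fst q \<subseteq> fst p} \<le> vertex_coord x v"
      unfolding vertex_coord_chain by (intro share_sum_mono) auto
  next
    fix b assume b: "leaf b" "spoke b \<subseteq> fst q"
    have "spoke_sign (snd q) b * spoke_coord x b = sum (vertex_share x) {p\<in>supp x. spoke b \<subseteq> fst p}"
      using spoke_coord_chain[OF b(1) q b(2)] spoke_sign_square by (simp add: mult.assoc[symmetric])
    then show "sum (vertex_share x) {p\<in>supp x. fst q \<subseteq> fst p} \<le> spoke_sign (snd q) b * spoke_coord x b"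
      using b(2) by (simp, intro share_sum_mono) auto
  qed
qed

lemma upper_level_chain_cell:
  assumes q: "q \<in> supp x"
  shows "upper_level (vertex_coord x) q = sum (vertex_share x) {p\<in>supp x. fst q \<subset> fst p}"
proof (rule antisym)
  show "upper_level (vertex_coord x) q \<le> sum (vertex_share x) {p\<in>supp x. fst q \<subset> fst p}"
  proof (rule upper_level_least)
    show "0 \<le> sum (vertex_share x) {p\<in>supp x. fst q \<subset> fst p}"
      using share_nonneg by (simp add: sum_nonneg)
    fix v assume "v \<in> V" "v \<notin> fst q"
    then have "{p\<in>supp x. v \<in> fst p} \<subseteq> {p\<in>supp x. fst q \<subset> fst p}"
      using cell_chain_comparable[OF chain_supp _ q] by blast
    then show "vertex_coord x v \<le> sum (vertex_share x) {p\<in>supp x. fst q \<subset> fst p}"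
      unfolding vertex_coord_chain by (rule share_sum_mono) auto
  qed
  show "sum (vertex_share x) {p\<in>supp x. fst q \<subset> fst p} \<le> upper_level (vertex_coord x) q"
  proof (cases "{p\<in>supp x. fst q \<subset> fst p} = {}")
    case True
    show ?thesis unfolding True using upper_level_nonneg by simp
  next
    case False
    then obtain p' where p': "p' \<in> {p\<in>supp x. fst q \<subset> fst p}"
      "\<And>p. p \<in> {p\<in>supp x. fst q \<subset> fst p} \<Longrightarrow> fst p' \<subseteq> fst p"
      using least_cell[of "{p\<in>supp x. fst q \<subset> fst p}"] by blast
    then obtain v where v: "v \<in> fst p'" "v \<notin> fst q" by blast
    have "v \<in> V" using v(1) p'(1) cellsD(2) supp_subset_cells by blast
    have "{p\<in>supp x. v \<in> fst p} = {p\<in>supp x. fst q \<subset> fst p}"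
      using cell_chain_comparable[OF chain_supp _ q] p'(2) v by blast
    then have "vertex_coord x v = sum (vertex_share x) {p\<in>supp x. fst q \<subset> fst p}"
      by (simp only: vertex_coord_chain)
    then show ?thesis
      using upper_level_ge_vertex[OF \<open>v \<in> V\<close> v(2), where t = "vertex_coord x"] by simp
  qed
qed

lemma cell_weight_chain_cell:
  assumes q: "q \<in> supp x"
  shows "cell_weight (vertex_coord x) (spoke_coord x) q = x q"
proof -
  have q_cell: "q \<in> cells" using q supp_subset_cells by blast
  have "{p\<in>supp x. fst q \<subseteq> fst p} = insert q {p\<in>supp x. fst q \<subset> fst p}"
    using cell_chain_fst_inj[OF chain_supp _ q] q by blast
  then have "lower_level (vertex_coord x) (spoke_coord x) q - upper_level (vertex_coord x) q = vertex_share x q"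
    unfolding lower_level_chain_cell[OF q] upper_level_chain_cell[OF q]
    using finite_supp by (simp add: sum.insert)
  then show ?thesis
    unfolding cell_weight_def using q_cell card_cell_pos[OF q_cell] realizationD(1)[OF x, of q]
    by (simp add: vertex_share_def)
qed

lemma lower_level_recoloured_nonpos:
  assumes q: "q \<in> cells" "q \<notin> supp x" and p: "p \<in> supp x" "fst p = fst q"
  shows "lower_level (vertex_coord x) (spoke_coord x) q \<le> 0"
proof -
  have p_cell: "p \<in> cells" using p supp_subset_cells by blast
  have "snd p \<noteq> snd q" using p q by (metis prod.expand)
  then obtain e where e: "snd p e \<noteq> snd q e" by blast
  then have e_q: "e \<in> pairs2 (fst q)" using cellsD(4)[OF p_cell] cellsD(4)[OF q(1)] p(2) by force
  have "\<exists>b. leaf b \<and> e = spoke b"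
    using e colour_off_spokes[OF p_cell _] colour_off_spokes[OF q(1) e_q] e_q p(2) by force
  then obtain b where b: "leaf b" "e = spoke b" by blast
  have spoke_q: "spoke b \<subseteq> fst q" using e_q b(2) unfolding pairs2_def by simp
  have "spoke_sign (snd q) b = - spoke_sign (snd p) b"
    using colour_spoke[OF p_cell b(1)] colour_spoke[OF q(1) b(1) spoke_q] spoke_q p(2) e b(2)
    unfolding spoke_sign_def by auto
  then have "spoke_sign (snd q) b * spoke_coord x b = - sum (vertex_share x) {p\<in>supp x. spoke b \<subseteq> fst p}"
    using spoke_coord_chain[OF b(1) p(1)] spoke_q p(2) spoke_sign_square by (simp add: mult.assoc[symmetric])
  also have "\<dots> \<le> 0" using share_nonneg by (simp add: sum_nonneg)
  finally show ?thesis
    using lower_level_le_spoke[OF q(1) b(1) spoke_q, where t = "vertex_coord x" and z = "spoke_coord x"]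
    by linarith
qed

lemma lower_level_le_upper_level:
  assumes q: "q \<in> cells" "q \<notin> supp x"
  shows "lower_level (vertex_coord x) (spoke_coord x) q \<le> upper_level (vertex_coord x) q"
proof (cases "\<exists>p\<in>supp x. fst p = fst q")
  case True
  then show ?thesis using lower_level_recoloured_nonpos[OF q] upper_level_nonneg by (meson order_trans)
next
  case False
  obtain v where v: "v \<in> fst q" "\<forall>p\<in>supp x. v \<in> fst p \<longrightarrow> \<not> fst p \<subseteq> fst q"
    using exists_vertex_outside_smaller_cells[OF cellsD(1)[OF q(1)]] False by blast
  show ?thesis
  proof (cases "{p\<in>supp x. \<not> fst p \<subseteq> fst q} = {}")
    case True
    then have no_cell: "{p\<in>supp x. v \<in> fst p} = {}" using v(2) by blast
    have "vertex_coord x v = 0" unfolding vertex_coord_chain no_cell by simp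
    then show ?thesis
      using lower_level_le_vertex[OF q(1) v(1), where t = "vertex_coord x" and z = "spoke_coord x"]
        upper_level_nonneg[where t = "vertex_coord x" and p = q]
      by linarith
  next
    case False
    then obtain p' where p': "p' \<in> {p\<in>supp x. \<not> fst p \<subseteq> fst q}"
      "\<And>p. p \<in> {p\<in>supp x. \<not> fst p \<subseteq> fst q} \<Longrightarrow> fst p' \<subseteq> fst p"
      using least_cell[of "{p\<in>supp x. \<not> fst p \<subseteq> fst q}"] by blast
    then obtain u where u: "u \<in> fst p'" "u \<notin> fst q" by blast
    have "u \<in> V" using u(1) p'(1) cellsD(2) supp_subset_cells by blast
    have "{p\<in>supp x. v \<in> fst p} \<subseteq> {p\<in>supp x. u \<in> fst p}"
      using v(2) p'(2) u(1) by blast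
    then have "vertex_coord x v \<le> vertex_coord x u"
      unfolding vertex_coord_chain by (rule share_sum_mono) auto
    then show ?thesis
      using lower_level_le_vertex[OF q(1) v(1), where t = "vertex_coord x" and z = "spoke_coord x"]
        upper_level_ge_vertex[OF \<open>u \<in> V\<close> u(2), where t = "vertex_coord x"]
      by linarith
  qed
qed

lemma cell_weight_coords: "cell_weight (vertex_coord x) (spoke_coord x) = x"
proof
  fix q
  consider "q \<in> supp x" | "q \<in> cells" "q \<notin> supp x" | "q \<notin> cells" by blast
  then show "cell_weight (vertex_coord x) (spoke_coord x) q = x q"
  proof cases
    case 1
    then show ?thesis by (rule cell_weight_chain_cell)
  next
    case 2
    then show ?thesis
      using lower_level_le_upper_level[OF 2] unfolding cell_weight_def supp_def by simp
  next
    case 3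
    then show ?thesis using supp_subset_cells unfolding cell_weight_def supp_def by auto
  qed
qed

end

definition support :: "('v \<Rightarrow> real) \<Rightarrow> 'v set" where
  "support t = {v\<in>V. t v \<noteq> 0}"

definition bottom_level :: "('v \<Rightarrow> real) \<Rightarrow> real" where
  "bottom_level t = Min (t ` support t)"

definition top_cell :: "('v \<Rightarrow> real) \<Rightarrow> ('v \<Rightarrow> real) \<Rightarrow> 'v cell" where
  "top_cell t z = (support t, \<lambda>e. if e \<in> pairs2 (support t)
                                 then (if \<exists>b. leaf b \<and> e = spoke b \<and> z b < 0 then 2 else 1) else 0)"

definition peel_t :: "('v \<Rightarrow> real) \<Rightarrow> 'v \<Rightarrow> real" where
  "peel_t t v = (if v \<in> support t then t v - bottom_level t else t v)"

definition peel_z :: "('v \<Rightarrow> real) \<Rightarrow> ('v \<Rightarrow> real) \<Rightarrow> 'v \<Rightarrow> real" where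
  "peel_z t z b = (if leaf b \<and> spoke b \<subseteq> support t
                   then z b - bottom_level t * spoke_sign (snd (top_cell t z)) b else z b)"

definition compatible_cell :: "('v \<Rightarrow> real) \<Rightarrow> ('v \<Rightarrow> real) \<Rightarrow> 'v cell \<Rightarrow> bool" where
  "compatible_cell t z p \<longleftrightarrow>
     fst p \<subseteq> support t \<and> (\<forall>b. leaf b \<and> spoke b \<subseteq> fst p \<longrightarrow> 0 < spoke_sign (snd p) b * z b)"

definition represents :: "('v cell \<Rightarrow> real) \<Rightarrow> ('v \<Rightarrow> real) \<Rightarrow> ('v \<Rightarrow> real) \<Rightarrow> bool" where
  "represents x t z \<longleftrightarrow> (\<forall>p. 0 \<le> x p) \<and> supp x \<subseteq> cells \<and> cell_chain (supp x) \<and>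
     (\<forall>p\<in>supp x. compatible_cell t z p) \<and> vertex_coord x = t \<and> spoke_coord x = z"

lemma support_subset_V: "support t \<subseteq> V"
  unfolding support_def by blast

lemma spoke_sign_top_cell:
  assumes "leaf b" "spoke b \<subseteq> support t"
  shows "spoke_sign (snd (top_cell t z)) b = (if z b < 0 then -1 else 1)"
proof -
  have "(\<exists>b'. leaf b' \<and> spoke b = spoke b' \<and> z b' < 0) \<longleftrightarrow> z b < 0"
    using spoke_inj assms(1) by metis
  then show ?thesis
    unfolding spoke_sign_def top_cell_def using spoke_in_pairs2[OF assms] by auto
qed

lemma spoke_sign_top_cell_mult: "leaf b \<Longrightarrow> spoke b \<subseteq> support t \<Longrightarrow>
  spoke_sign (snd (top_cell t z)) b * z b = \<bar>z b\<bar>"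
  using spoke_sign_top_cell by simp

context
  fixes t z :: "'v \<Rightarrow> real"
  assumes tz: "cone_point t z" and nonempty: "support t \<noteq> {}"
begin

lemma finite_support: "finite (support t)"
  using finite_subset[OF support_subset_V finite_V] .

lemma bottom_level_le: "v \<in> support t \<Longrightarrow> bottom_level t \<le> t v"
  unfolding bottom_level_def using finite_support by simp

lemma bottom_level_attained: "\<exists>v\<in>support t. t v = bottom_level t"
  unfolding bottom_level_def using finite_support nonempty
  by (metis (mono_tags, lifting) Min_in finite_imageI image_iff image_is_empty)

lemma bottom_level_pos: "0 < bottom_level t"
  using bottom_level_attained cone_pointD(1)[OF tz] unfolding support_def
  by (metis (mono_tags, lifting) mem_Collect_eq order_le_neq_trans)

lemma bottom_level_le_abs_spoke:
  "leaf b \<Longrightarrow> spoke b \<subseteq> support t \<Longrightarrow> bottom_level t \<le> \<bar>z b\<bar>"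
  using cone_pointD(3)[OF tz] bottom_level_le unfolding spoke_def by simp

lemma top_cell_in_cells: "top_cell t z \<in> cells"
proof -
  have "1 \<le> snd (top_cell t z) e \<and> snd (top_cell t z) e \<le> \<mu> e" if e: "e \<in> pairs2 (support t)" for e
  proof (cases "\<exists>b. leaf b \<and> e = spoke b \<and> z b < 0")
    case True
    then show ?thesis using e multiplicity_spoke unfolding top_cell_def by auto
  next
    case False
    then show ?thesis
      using e multiplicity_bounds pairs2_mono[OF support_subset_V] unfolding top_cell_def by auto
  qed
  then show ?thesis
    unfolding inflation_def using nonempty support_subset_V by (auto simp: top_cell_def)
qed

lemma peel_z_spoke:
  assumes "leaf b" "spoke b \<subseteq> support t"
  shows "peel_z t z b = spoke_sign (snd (top_cell t z)) b * (\<bar>z b\<bar> - bottom_level t)"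
  using assms spoke_sign_top_cell[OF assms] unfolding peel_z_def by auto

lemma cone_point_peel: "cone_point (peel_t t) (peel_z t z)"
  unfolding cone_point_def
proof (intro conjI allI impI)
  show nonneg: "0 \<le> peel_t t v" for v
    unfolding peel_t_def using bottom_level_le cone_pointD(1)[OF tz] by simp
  show "peel_t t v = 0" if "v \<notin> V" for v
    using that cone_pointD(2)[OF tz] support_subset_V unfolding peel_t_def by auto
  show "peel_z t z b = 0" if "\<not> leaf b" for b
    using that cone_pointD(4)[OF tz] unfolding peel_z_def by simp
  fix b assume b: "leaf b"
  show "\<bar>peel_z t z b\<bar> = min (peel_t t (centre b)) (peel_t t b)"
  proof (cases "spoke b \<subseteq> support t")
    case True
    then have "centre b \<in> support t" "b \<in> support t" unfolding spoke_def by auto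
    then show ?thesis
      using peel_z_spoke[OF b True] bottom_level_le_abs_spoke[OF b True] cone_pointD(3)[OF tz b]
      unfolding peel_t_def by (simp add: abs_mult)
  next
    case False
    then obtain u where u: "u \<in> {centre b, b}" "u \<notin> support t" unfolding spoke_def by blast
    then have "t u = 0" "peel_t t u = 0"
      using leafD[OF b] unfolding support_def peel_t_def by auto
    then have "min (t (centre b)) (t b) = 0" "min (peel_t t (centre b)) (peel_t t b) = 0"
      using u(1) nonneg[of b] nonneg[of "centre b"] cone_pointD(1)[OF tz, of b]
        cone_pointD(1)[OF tz, of "centre b"]
      by (auto simp: min_def)
    then show ?thesis
      using False cone_pointD(3)[OF tz b] unfolding peel_z_def by simp
  qed
qed

lemma support_peel_psubset: "support (peel_t t) \<subset> support t"
proof -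
  obtain v0 where "v0 \<in> support t" "t v0 = bottom_level t" using bottom_level_attained by blast
  then have "v0 \<notin> support (peel_t t)" "v0 \<in> support t"
    unfolding support_def peel_t_def by auto
  moreover have "support (peel_t t) \<subseteq> support t"
    unfolding support_def peel_t_def by auto
  ultimately show ?thesis by blast
qed

lemma compatible_top_cell: "compatible_cell t z (top_cell t z)"
  unfolding compatible_cell_def
proof (intro conjI allI impI)
  show "fst (top_cell t z) \<subseteq> support t" by (simp add: top_cell_def)
  fix b assume b: "leaf b \<and> spoke b \<subseteq> fst (top_cell t z)"
  then have b': "leaf b" "spoke b \<subseteq> support t" by (simp_all add: top_cell_def)
  then have "0 < \<bar>z b\<bar>" using bottom_level_le_abs_spoke bottom_level_pos by fastforce
  then show "0 < spoke_sign (snd (top_cell t z)) b * z b" using spoke_sign_top_cell_mult[OF b'] by simp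
qed

lemma compatible_peel_spoke_sign:
  assumes "compatible_cell (peel_t t) (peel_z t z) p" "leaf b" "spoke b \<subseteq> fst p"
  shows "spoke_sign (snd p) b = spoke_sign (snd (top_cell t z)) b \<and> bottom_level t < \<bar>z b\<bar>"
proof -
  have spoke_t: "spoke b \<subseteq> support t"
    using assms(1,3) support_peel_psubset unfolding compatible_cell_def by blast
  have "0 < spoke_sign (snd p) b * peel_z t z b"
    using assms unfolding compatible_cell_def by blast
  then have "0 < (spoke_sign (snd p) b * spoke_sign (snd (top_cell t z)) b) * (\<bar>z b\<bar> - bottom_level t)"
    unfolding peel_z_spoke[OF assms(2) spoke_t] by (simp add: mult.assoc)
  moreover have "0 \<le> \<bar>z b\<bar> - bottom_level t" using bottom_level_le_abs_spoke[OF assms(2) spoke_t] by simp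
  ultimately show ?thesis
    unfolding spoke_sign_def by (auto simp: zero_less_mult_iff split: if_splits)
qed

lemma compatible_peel:
  assumes "compatible_cell (peel_t t) (peel_z t z) p"
  shows "compatible_cell t z p"
  using assms compatible_peel_spoke_sign[OF assms] spoke_sign_top_cell_mult bottom_level_pos
    support_peel_psubset
  unfolding compatible_cell_def by fastforce

lemma compatible_peel_less_top_cell:
  assumes p: "p \<in> cells" "compatible_cell (peel_t t) (peel_z t z) p"
  shows "inflation_less p (top_cell t z)"
proof -
  have fst_p: "fst p \<subset> support t"
    using p(2) support_peel_psubset unfolding compatible_cell_def by blast
  have "snd p e = snd (top_cell t z) e" if e: "e \<in> pairs2 (fst p)" for e
  proof (cases "\<exists>b. leaf b \<and> e = spoke b")
    case True
    then obtain b where b: "leaf b" "e = spoke b" by blast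
    have spoke_p: "spoke b \<subseteq> fst p" using e b(2) unfolding pairs2_def by simp
    then have "spoke b \<subseteq> fst (top_cell t z)" using fst_p by (auto simp: top_cell_def)
    then show ?thesis
      using compatible_peel_spoke_sign[OF p(2) b(1) spoke_p] colour_spoke[OF p(1) b(1) spoke_p]
        colour_spoke[OF top_cell_in_cells b(1)] b(2)
      unfolding spoke_sign_def by (auto split: if_splits)
  next
    case False
    have "e \<in> pairs2 (fst (top_cell t z))"
      using e pairs2_mono[of "fst p" "support t"] fst_p by (auto simp: top_cell_def)
    then show ?thesis
      using colour_off_spokes[OF p(1) e False] colour_off_spokes[OF top_cell_in_cells _ False] by simp
  qed
  then show ?thesis unfolding inflation_less_def using fst_p by (simp add: top_cell_def)
qed

text \<open>Removing from \<open>t\<close> its bottom level on the support (and correspondingly from the spoke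
  coordinates) subtracts a multiple of the barycentre of the top cell and shrinks the support;
  a chain representing the remainder lies below the top cell and can be extended by it.\<close>

lemma represents_add_top_cell:
  assumes x': "represents x' (peel_t t) (peel_z t z)"
  shows "represents (\<lambda>p. x' p + (if p = top_cell t z then real (card (support t)) * bottom_level t else 0)) t z"
proof -
  define p0 where "p0 = top_cell t z"
  define c where "c = real (card (support t)) * bottom_level t"
  define x where "x p = x' p + (if p = p0 then c else 0)" for p
  have card_pos: "0 < real (card (support t))" using finite_support nonempty by (simp add: card_gt_0_iff)
  then have c_pos: "0 < c" unfolding c_def using bottom_level_pos by simp
  have x'_props: "\<forall>p. 0 \<le> x' p" "supp x' \<subseteq> cells" "cell_chain (supp x')"
    "\<And>p. p \<in> supp x' \<Longrightarrow> compatible_cell (peel_t t) (peel_z t z) p"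
    "vertex_coord x' = peel_t t" "spoke_coord x' = peel_z t z"
    using x' unfolding represents_def by auto
  have below: "inflation_less p p0" if "p \<in> supp x'" for p
    unfolding p0_def using compatible_peel_less_top_cell x'_props(2,4) that by blast
  then have "x' p0 = 0" unfolding inflation_less_def supp_def by blast
  then have supp_x: "supp x = insert p0 (supp x')"
    unfolding x_def supp_def using c_pos by auto
  have "cell_chain (supp x)"
    unfolding supp_x cell_chain_def using cell_chainD[OF x'_props(3)] below by blast
  moreover have "\<forall>p\<in>supp x. compatible_cell t z p"
    unfolding supp_x p0_def using compatible_top_cell compatible_peel x'_props(4) by blast
  moreover have "vertex_coord x = t"
  proof
    fix v
    show "vertex_coord x v = t v"
      unfolding x_def vertex_coord_add_cell x'_props(5) p0_def c_def
      using top_cell_in_cells card_pos support_subset_V unfolding peel_t_def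
      by (auto simp: top_cell_def support_def)
  qed
  moreover have "spoke_coord x = z"
  proof
    fix b
    show "spoke_coord x b = z b"
      unfolding x_def spoke_coord_add_cell x'_props(6) p0_def c_def
      using top_cell_in_cells card_pos unfolding peel_z_def by (auto simp: top_cell_def)
  qed
  moreover have "\<forall>p. 0 \<le> x p" using x'_props(1) c_pos by (simp add: x_def)
  moreover have "supp x \<subseteq> cells" unfolding supp_x p0_def using x'_props(2) top_cell_in_cells by blast
  ultimately have "represents x t z" unfolding represents_def by blast
  then show ?thesis unfolding x_def p0_def c_def .
qed

end

lemma exists_represents: "cone_point t z \<Longrightarrow> \<exists>x. represents x t z"
proof (induction "card (support t)" arbitrary: t z rule: less_induct)
  case less
  show ?case
  proof (cases "support t = {}")
    case True
    have t0: "t v = 0" for v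
      using True cone_pointD(2)[OF less.prems] unfolding support_def by blast
    have "z b = 0" for b
      using cone_pointD(3,4)[OF less.prems, of b] t0 by (cases "leaf b") simp_all
    with t0 have "t = (\<lambda>_. 0)" "z = (\<lambda>_. 0)" by auto
    then have "represents (\<lambda>_. 0) t z"
      unfolding represents_def cell_chain_def supp_def vertex_coord_def spoke_coord_def vertex_share_def
      by (simp add: fun_eq_iff)
    then show ?thesis by blast
  next
    case False
    have "card (support (peel_t t)) < card (support t)"
      using psubset_card_mono[OF finite_support support_peel_psubset] less.prems False by blast
    then obtain x' where "represents x' (peel_t t) (peel_z t z)"
      using less.hyps cone_point_peel[OF less.prems False] by blast
    then show ?thesis using represents_add_top_cell[OF less.prems False] by blast
  qed
qed

lemma inflated_point_has_preimage:
  assumes "(t, z) \<in> inflated_points"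
  obtains x where "x \<in> topspace realization" "vertex_coord x = t" "spoke_coord x = z"
proof -
  have "cone_point t z" using inflated_pointsD(1)[OF assms] by simp
  then obtain x where "represents x t z" using exists_represents by blast
  then have x: "\<forall>p. 0 \<le> x p" "supp x \<subseteq> cells" "cell_chain (supp x)" "vertex_coord x = t" "spoke_coord x = z"
    unfolding represents_def by auto
  have "sum x (supp x) = sum x cells"
    by (rule sum.mono_neutral_left[OF finite_cells x(2)]) (auto simp: supp_def)
  also have "\<dots> = sum t V" using sum_vertex_coord[of x] x(4) by simp
  also have "\<dots> = 1" using inflated_pointsD(2)[OF assms] by simp
  finally have "x \<in> topspace realization" using x(1-3) realizationI by blast
  then show ?thesis using that x(4,5) by blast
qed

lemma continuous_map_realization_projection: "continuous_map realization euclideanreal (\<lambda>x. x p)"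
  unfolding order_complex_realization_def
  by (rule continuous_map_from_subtopology[OF continuous_map_product_projection]) simp

lemma continuous_map_into_realization:
  assumes "\<And>p. continuous_map T euclideanreal (\<lambda>x. f x p)"
    "\<And>x. x \<in> topspace T \<Longrightarrow> f x \<in> topspace realization"
  shows "continuous_map T realization f"
  using assms unfolding order_complex_realization_def continuous_map_in_subtopology
    continuous_map_componentwise_UNIV by auto

lemma continuous_map_vertex_share: "continuous_map realization euclideanreal (\<lambda>x. vertex_share x p)"
  unfolding vertex_share_def divide_inverse
  by (intro continuous_map_real_mult_right continuous_map_realization_projection)

lemma continuous_map_vertex_coord: "continuous_map realization euclideanreal (\<lambda>x. vertex_coord x v)"
  unfolding vertex_coord_def
  by (intro continuous_map_sum continuous_map_vertex_share) (use finite_cells in auto)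

lemma continuous_map_spoke_coord: "continuous_map realization euclideanreal (\<lambda>x. spoke_coord x b)"
  unfolding spoke_coord_def
  by (cases "leaf b", simp_all)
     (intro continuous_map_sum continuous_map_real_mult_right continuous_map_vertex_share,
      use finite_cells in auto)

lemma continuous_map_inflated_simplex_fst: "continuous_map inflated_simplex euclideanreal (\<lambda>y. fst y v)"
  unfolding inflated_simplex_def
  by (rule continuous_map_from_subtopology,
      rule continuous_map_compose[OF continuous_map_fst continuous_map_product_projection, unfolded o_def])
     simp

lemma continuous_map_inflated_simplex_snd: "continuous_map inflated_simplex euclideanreal (\<lambda>y. snd y v)"
  unfolding inflated_simplex_def
  by (rule continuous_map_from_subtopology,
      rule continuous_map_compose[OF continuous_map_snd continuous_map_product_projection, unfolded o_def])
     simp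

lemma continuous_map_into_inflated_simplex:
  "(\<And>v. continuous_map T euclideanreal (\<lambda>x. fst (f x) v)) \<Longrightarrow>
   (\<And>v. continuous_map T euclideanreal (\<lambda>x. snd (f x) v)) \<Longrightarrow>
   (\<And>x. x \<in> topspace T \<Longrightarrow> f x \<in> inflated_points) \<Longrightarrow> continuous_map T inflated_simplex f"
  unfolding inflated_simplex_def continuous_map_in_subtopology continuous_map_pairwise o_def
    continuous_map_componentwise_UNIV
  by blast

lemma continuous_map_lower_level:
  assumes "p \<in> cells"
  shows "continuous_map inflated_simplex euclideanreal (\<lambda>y. lower_level (fst y) (snd y) p)"
proof -
  define level :: "'v + 'v \<Rightarrow> ('v \<Rightarrow> real) \<times> ('v \<Rightarrow> real) \<Rightarrow> real"
    where "level i y = (case i of Inl v \<Rightarrow> fst y v | Inr b \<Rightarrow> spoke_sign (snd p) b * snd y b)" for i y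
  define I where "I = Inl ` fst p \<union> Inr ` {b. leaf b \<and> spoke b \<subseteq> fst p}"
  have "lower_level (fst y) (snd y) p = Min ((\<lambda>i. level i y) ` I)" for y
    unfolding lower_level_def I_def level_def image_Un image_image by simp
  moreover have "continuous_map inflated_simplex euclideanreal (\<lambda>y. Min ((\<lambda>i. level i y) ` I))"
  proof (rule continuous_map_Min)
    show "finite I" unfolding I_def using finite_cell[OF assms] finite_spokes_in by simp
    show "I \<noteq> {}" unfolding I_def using cellsD(1)[OF assms] by simp
    show "continuous_map inflated_simplex euclideanreal (level i)" for i
      unfolding level_def
      by (cases i) (simp_all add: continuous_map_inflated_simplex_fst continuous_map_inflated_simplex_snd
          continuous_map_real_mult_left)
  qed
  ultimately show ?thesis by simp
qed

lemma continuous_map_upper_level: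
  "continuous_map inflated_simplex euclideanreal (\<lambda>y. upper_level (fst y) p)"
proof -
  define level :: "'v option \<Rightarrow> ('v \<Rightarrow> real) \<times> ('v \<Rightarrow> real) \<Rightarrow> real"
    where "level i y = (case i of None \<Rightarrow> 0 | Some v \<Rightarrow> fst y v)" for i y
  define I where "I = insert None (Some ` (V - fst p))"
  have "upper_level (fst y) p = Max ((\<lambda>i. level i y) ` I)" for y
    unfolding upper_level_def I_def level_def image_insert image_image by simp
  moreover have "continuous_map inflated_simplex euclideanreal (\<lambda>y. Max ((\<lambda>i. level i y) ` I))"
  proof (rule continuous_map_Max)
    show "finite I" unfolding I_def using finite_V by simp
    show "I \<noteq> {}" unfolding I_def by simp
    show "continuous_map inflated_simplex euclideanreal (level i)" for i
      unfolding level_def by (cases i) (simp_all add: continuous_map_inflated_simplex_fst)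
  qed
  ultimately show ?thesis by simp
qed

lemma cell_weight_inverse:
  assumes "y \<in> inflated_points"
  shows "cell_weight (fst y) (snd y) \<in> topspace realization"
    "vertex_coord (cell_weight (fst y) (snd y)) = fst y" "spoke_coord (cell_weight (fst y) (snd y)) = snd y"
proof -
  obtain x where x: "x \<in> topspace realization" "vertex_coord x = fst y" "spoke_coord x = snd y"
    using inflated_point_has_preimage[of "fst y" "snd y"] assms by auto
  then have "cell_weight (fst y) (snd y) = x" using cell_weight_coords[OF x(1)] by simp
  then show "cell_weight (fst y) (snd y) \<in> topspace realization"
    "vertex_coord (cell_weight (fst y) (snd y)) = fst y" "spoke_coord (cell_weight (fst y) (snd y)) = snd y"
    using x by simp_all
qed

lemma realization_homeomorphic_inflated_simplex: "realization homeomorphic_space inflated_simplex"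
  unfolding homeomorphic_space_def homeomorphic_maps_def
proof (intro exI conjI ballI)
  show "continuous_map realization inflated_simplex (\<lambda>x. (vertex_coord x, spoke_coord x))"
    using continuous_map_vertex_coord continuous_map_spoke_coord coords_in_inflated_points
    by (intro continuous_map_into_inflated_simplex) simp_all
  show "continuous_map inflated_simplex realization (\<lambda>y. cell_weight (fst y) (snd y))"
  proof (rule continuous_map_into_realization)
    show "continuous_map inflated_simplex euclideanreal (\<lambda>y. cell_weight (fst y) (snd y) p)" for p
      unfolding cell_weight_def
      by (cases "p \<in> cells", simp_all)
         (intro continuous_map_real_mult_left continuous_map_real_max continuous_map_diff
          continuous_map_canonical_const continuous_map_lower_level continuous_map_upper_level, simp)
    show "cell_weight (fst y) (snd y) \<in> topspace realization" if "y \<in> topspace inflated_simplex" for y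
      using cell_weight_inverse(1) that by simp
  qed
  show "cell_weight (fst (vertex_coord x, spoke_coord x)) (snd (vertex_coord x, spoke_coord x)) = x"
    if "x \<in> topspace realization" for x
    using cell_weight_coords[OF that] by simp
  show "(vertex_coord (cell_weight (fst y) (snd y)), spoke_coord (cell_weight (fst y) (snd y))) = y"
    if "y \<in> topspace inflated_simplex" for y
    using cell_weight_inverse(2,3) that by (simp add: prod_eq_iff)
qed

section \<open>The inflated simplex is homotopy equivalent to a sphere\<close>

definition star_vector :: "('v \<Rightarrow> real) \<times> ('v \<Rightarrow> real) \<Rightarrow> 'v \<Rightarrow> real" where
  "star_vector y v =
     (if v \<in> V then (if centre v = v then fst y v - sum (fst y) (leaves v) else snd y v) else 0)"

definition to_sphere :: "('v \<Rightarrow> real) \<times> ('v \<Rightarrow> real) \<Rightarrow> 'v \<Rightarrow> real" where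
  "to_sphere y = normalized V (star_vector y)"

definition leaf_mass :: "('v \<Rightarrow> real) \<Rightarrow> 'v \<Rightarrow> real" where
  "leaf_mass u a = (\<Sum>b\<in>leaves a. \<bar>u b\<bar>)"

text \<open>Up to scaling, \<open>lift_t\<close> and \<open>lift_z\<close> invert \<open>star_vector\<close> wherever \<open>u a + leaf_mass u a \<ge> 0\<close> at
  the centres \<open>a\<close>; a negative value of \<open>u a + leaf_mass u a\<close> is instead moved, with reversed sign, to
  every leaf of \<open>a\<close>.\<close>

definition lift_t :: "('v \<Rightarrow> real) \<Rightarrow> 'v \<Rightarrow> real" where
  "lift_t u v =
     (if v \<in> V then (if centre v = v then max 0 (u v + leaf_mass u v)
                    else \<bar>u v\<bar> + max 0 (- u (centre v) - leaf_mass u (centre v))) else 0)"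

definition lift_z :: "('v \<Rightarrow> real) \<Rightarrow> 'v \<Rightarrow> real" where
  "lift_z u b = (if leaf b then clamp (u b) (min (lift_t u (centre b)) (lift_t u b)) else 0)"

definition from_sphere :: "('v \<Rightarrow> real) \<Rightarrow> ('v \<Rightarrow> real) \<times> ('v \<Rightarrow> real)" where
  "from_sphere u = (\<lambda>v. lift_t u v / sum (lift_t u) V, \<lambda>v. lift_z u v / sum (lift_t u) V)"

definition leaf_excess :: "('v \<Rightarrow> real) \<Rightarrow> 'v \<Rightarrow> real" where
  "leaf_excess t a = (\<Sum>b\<in>leaves a. max 0 (t b - t a))"

definition deform_t :: "real \<Rightarrow> ('v \<Rightarrow> real) \<Rightarrow> 'v \<Rightarrow> real" where
  "deform_t s t v =
     (if v \<in> V then (if centre v = v then max 0 (t v - s * leaf_excess t v)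
                    else min (t (centre v)) (t v) + (1 - s) * max 0 (t v - t (centre v))
                         + max 0 (s * leaf_excess t (centre v) - t (centre v))) else 0)"

definition deform_z :: "real \<Rightarrow> ('v \<Rightarrow> real) \<Rightarrow> ('v \<Rightarrow> real) \<Rightarrow> 'v \<Rightarrow> real" where
  "deform_z s t z b = (if leaf b then clamp (z b) (min (deform_t s t (centre b)) (deform_t s t b)) else 0)"

definition deform :: "real \<Rightarrow> ('v \<Rightarrow> real) \<times> ('v \<Rightarrow> real) \<Rightarrow> ('v \<Rightarrow> real) \<times> ('v \<Rightarrow> real)" where
  "deform s y = (\<lambda>v. deform_t s (fst y) v / sum (deform_t s (fst y)) V,
                 \<lambda>v. deform_z s (fst y) (snd y) v / sum (deform_t s (fst y)) V)"

lemma leaf_mass_nonneg: "0 \<le> leaf_mass u a"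
  unfolding leaf_mass_def by (simp add: sum_nonneg)

lemma lift_t_nonneg: "0 \<le> lift_t u v"
  unfolding lift_t_def by simp

lemma lift_t_leaf: "leaf v \<Longrightarrow> lift_t u v = \<bar>u v\<bar> + max 0 (- u (centre v) - leaf_mass u (centre v))"
  unfolding lift_t_def leaf_def by simp

lemma lift_t_centre: "v \<in> V \<Longrightarrow> centre v = v \<Longrightarrow> lift_t u v = max 0 (u v + leaf_mass u v)"
  unfolding lift_t_def by simp

lemma cone_point_lift: "cone_point (lift_t u) (lift_z u)"
  unfolding cone_point_def
proof (intro conjI allI impI)
  fix b assume b: "leaf b"
  have "min (lift_t u (centre b)) (lift_t u b) \<le> \<bar>u b\<bar>"
  proof (cases "0 < - u (centre b) - leaf_mass u (centre b)")
    case True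
    then show ?thesis using lift_t_centre centre_of_leaf[OF b] by simp
  next
    case False
    then show ?thesis using lift_t_leaf[OF b] by simp
  qed
  then show "\<bar>lift_z u b\<bar> = min (lift_t u (centre b)) (lift_t u b)"
    unfolding lift_z_def using b abs_clamp lift_t_nonneg by simp
qed (auto simp: lift_t_nonneg lift_t_def lift_z_def)

lemma lift_mass_pos:
  assumes "u \<in> sphere_points V"
  shows "0 < sum (lift_t u) V"
proof -
  obtain v where v: "v \<in> V" "u v \<noteq> 0"
    using sphere_points_nonzero[OF finite_V assms] by blast
  have "\<exists>w\<in>V. 0 < lift_t u w"
  proof (cases "centre v = v")
    case False
    then have "leaf v" using v unfolding leaf_def by simp
    then show ?thesis using lift_t_leaf v by (intro bexI[of _ v]) (auto intro: add_pos_nonneg)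
  next
    case centre: True
    consider "0 < u v + leaf_mass u v" | "0 < - u v - leaf_mass u v" | "leaf_mass u v = - u v"
      by linarith
    then show ?thesis
    proof cases
      case 1
      then show ?thesis using lift_t_centre[OF v(1) centre, of u] v(1) by (intro bexI[of _ v]) auto
    next
      case 2
      obtain b where "b \<in> leaves v" using centre_has_leaf[OF v(1) centre] unfolding leaves_def by blast
      then have "leaf b" "centre b = v" using in_leavesD by auto
      then show ?thesis
        using 2 lift_t_leaf leafD by (intro bexI[of _ b]) (auto intro: add_nonneg_pos)
    next
      case 3
      then have "leaf_mass u v \<noteq> 0" using v(2) by linarith
      then obtain b where b: "b \<in> leaves v" "\<bar>u b\<bar> \<noteq> 0"
        using sum.not_neutral_contains_not_neutral unfolding leaf_mass_def by blast
      then have "leaf b" using in_leavesD by blast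
      then show ?thesis
        using b lift_t_leaf leafD by (intro bexI[of _ b]) (auto intro: add_pos_nonneg)
    qed
  qed
  then obtain w where "w \<in> V" "0 < lift_t u w" by blast
  then show ?thesis by (rule sum_pos2[OF finite_V]) (simp add: lift_t_nonneg)
qed

lemma from_sphere_in_inflated_points: "u \<in> sphere_points V \<Longrightarrow> from_sphere u \<in> inflated_points"
  unfolding from_sphere_def using inflated_points_normalize[OF cone_point_lift lift_mass_pos] .

lemma star_vector_nonzero:
  assumes y: "y \<in> inflated_points"
  shows "\<exists>v\<in>V. star_vector y v \<noteq> 0"
proof -
  define t where "t = fst y"
  have tz: "cone_point t (snd y)" "sum t V = 1" using inflated_pointsD[OF y] unfolding t_def by auto
  have "sum t V \<noteq> 0" using tz(2) by simp
  then obtain v where v: "v \<in> V" "t v \<noteq> 0" by (rule sum.not_neutral_contains_not_neutral)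
  define a where "a = centre v"
  have a: "a \<in> V" "centre a = a" unfolding a_def using centre_in_V centre_centre v(1) by auto
  show ?thesis
  proof (cases "star_vector y a = 0")
    case False
    then show ?thesis using a(1) by blast
  next
    case True
    then have ta: "t a = sum t (leaves a)" unfolding star_vector_def t_def using a by simp
    have v_a: "v = a \<or> v \<in> leaves a" unfolding leaves_def a_def using v(1) by auto
    have "t a \<noteq> 0"
    proof
      assume "t a = 0"
      then have "\<forall>b\<in>leaves a. t b = 0"
        using ta sum_nonneg_eq_0_iff[OF finite_leaves, of a t] cone_pointD(1)[OF tz(1)] by simp
      with \<open>t a = 0\<close> v_a v(2) show False by blast
    qed
    then have "sum t (leaves a) \<noteq> 0" using ta by simp
    then obtain b where b: "b \<in> leaves a" "t b \<noteq> 0" by (rule sum.not_neutral_contains_not_neutral)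
    then have lb: "leaf b" "centre b = a" using in_leavesD by auto
    have "0 < min (t a) (t b)"
      using \<open>t a \<noteq> 0\<close> b(2) cone_pointD(1)[OF tz(1), of a] cone_pointD(1)[OF tz(1), of b] by simp
    moreover have "star_vector y b = snd y b" using leafD[OF lb(1)] by (simp add: star_vector_def)
    moreover have "\<bar>snd y b\<bar> = min (t a) (t b)" using cone_pointD(3)[OF tz(1) lb(1)] lb(2) by simp
    ultimately have "star_vector y b \<noteq> 0" by auto
    then show ?thesis using leafD[OF lb(1)] by blast
  qed
qed

lemma to_sphere_in_sphere_points:
  assumes "y \<in> inflated_points"
  shows "to_sphere y \<in> sphere_points V"
  unfolding to_sphere_def
proof (rule normalized_in_sphere_points)
  show "0 < sqnorm V (star_vector y)"
    using star_vector_nonzero[OF assms] sqnorm_pos_iff[OF finite_V] by blast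
  show "star_vector y v = 0" if "v \<notin> V" for v
    using that by (simp add: star_vector_def)
qed

lemma leaf_excess_nonneg: "0 \<le> leaf_excess t a"
  unfolding leaf_excess_def by (simp add: sum_nonneg)

lemma deform_t_centre: "a \<in> V \<Longrightarrow> centre a = a \<Longrightarrow> deform_t s t a = max 0 (t a - s * leaf_excess t a)"
  unfolding deform_t_def by simp

lemma deform_t_leaf:
  "leaf b \<Longrightarrow> deform_t s t b = min (t (centre b)) (t b) + (1 - s) * max 0 (t b - t (centre b))
     + max 0 (s * leaf_excess t (centre b) - t (centre b))"
  unfolding deform_t_def leaf_def by simp

context
  fixes s :: real and t :: "'v \<Rightarrow> real"
  assumes s: "0 \<le> s" "s \<le> 1" and t_nonneg: "\<And>v. 0 \<le> t v"
begin

lemma deform_t_nonneg: "0 \<le> deform_t s t v"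
  unfolding deform_t_def using s t_nonneg by simp

lemma min_deform_t_le:
  assumes b: "leaf b"
  shows "min (deform_t s t (centre b)) (deform_t s t b) \<le> min (t (centre b)) (t b)"
proof -
  have c: "centre b \<in> V" "centre (centre b) = centre b" using centre_of_leaf[OF b] by auto
  have le_centre: "deform_t s t (centre b) \<le> t (centre b)"
    unfolding deform_t_centre[OF c] using s leaf_excess_nonneg t_nonneg by simp
  consider "t (centre b) \<le> t b" | "t b < t (centre b)" "t (centre b) < s * leaf_excess t (centre b)"
    | "t b < t (centre b)" "s * leaf_excess t (centre b) \<le> t (centre b)" by linarith
  then show ?thesis
  proof cases
    case 1
    then show ?thesis using le_centre by simp
  next
    case 2
    then have "deform_t s t (centre b) = 0" unfolding deform_t_centre[OF c] by simp
    then show ?thesis using t_nonneg by (simp add: min_le_iff_disj)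
  next
    case 3
    then have "deform_t s t b = t b" unfolding deform_t_leaf[OF b] by simp
    then show ?thesis using 3 by simp
  qed
qed

lemma cone_point_deform:
  assumes tz: "cone_point t z"
  shows "cone_point (deform_t s t) (deform_z s t z)"
  unfolding cone_point_def
proof (intro conjI allI impI)
  show "0 \<le> deform_t s t v" for v by (rule deform_t_nonneg)
  show "deform_t s t v = 0" if "v \<notin> V" for v using that by (simp add: deform_t_def)
  show "deform_z s t z b = 0" if "\<not> leaf b" for b using that by (simp add: deform_z_def)
  fix b assume b: "leaf b"
  have "min (deform_t s t (centre b)) (deform_t s t b) \<le> \<bar>z b\<bar>"
    using min_deform_t_le[OF b] cone_pointD(3)[OF tz b] by simp
  then show "\<bar>deform_z s t z b\<bar> = min (deform_t s t (centre b)) (deform_t s t b)"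
    unfolding deform_z_def using b abs_clamp deform_t_nonneg by simp
qed

lemma deform_t_leaf_pos:
  assumes b: "leaf b" and tb: "t b \<noteq> 0"
  shows "0 < deform_t s t b"
proof -
  define a where "a = centre b"
  have tb_pos: "0 < t b" using tb t_nonneg[of b] by simp
  have rest: "0 \<le> (1 - s) * max 0 (t b - t a)" "0 \<le> max 0 (s * leaf_excess t a - t a)"
    using s by simp_all
  show ?thesis
  proof (cases "0 < min (t a) (t b)")
    case True
    then show ?thesis using deform_t_leaf[OF b, of s t] rest unfolding a_def by linarith
  next
    case False
    then have ta: "t a = 0" using tb_pos t_nonneg[of a] by (auto simp: min_def split: if_splits)
    have "max 0 (t b - t a) \<le> leaf_excess t a"
      unfolding leaf_excess_def a_def using leaf_in_leaves[OF b] finite_leaves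
      by (intro member_le_sum) auto
    then have "s * t b \<le> s * leaf_excess t a" using ta tb_pos s by (simp add: mult_left_mono)
    moreover have "deform_t s t b = (1 - s) * t b + max 0 (s * leaf_excess t a)"
      using deform_t_leaf[OF b] ta t_nonneg[of b] unfolding a_def[symmetric] by simp
    ultimately show ?thesis using tb_pos s by (simp add: algebra_simps)
  qed
qed

text \<open>If the deformation kills a centre, some leaf of it exceeds the centre and survives.\<close>

lemma exists_deform_t_pos:
  assumes v: "v \<in> V" "t v \<noteq> 0"
  shows "\<exists>w\<in>V. 0 < deform_t s t w"
proof (cases "leaf v")
  case True
  then show ?thesis using deform_t_leaf_pos v by blast
next
  case False
  then have centre: "centre v = v" using v(1) unfolding leaf_def by simp
  show ?thesis
  proof (cases "0 < t v - s * leaf_excess t v")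
    case True
    then show ?thesis using deform_t_centre[OF v(1) centre, of s t] v(1) by (intro bexI[of _ v]) auto
  next
    case False
    then have "leaf_excess t v \<noteq> 0" using v(2) t_nonneg[of v] by auto
    then obtain b where b: "b \<in> leaves v" "max 0 (t b - t v) \<noteq> 0"
      using sum.not_neutral_contains_not_neutral unfolding leaf_excess_def by blast
    then have "leaf b" "t b \<noteq> 0" using in_leavesD t_nonneg[of v] by force+
    then show ?thesis using deform_t_leaf_pos leafD by blast
  qed
qed

lemma deform_mass_pos:
  assumes "v \<in> V" "t v \<noteq> 0"
  shows "0 < sum (deform_t s t) V"
proof -
  obtain w where "w \<in> V" "0 < deform_t s t w" using exists_deform_t_pos[OF assms] by blast
  then show ?thesis by (rule sum_pos2[OF finite_V]) (simp add: deform_t_nonneg)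
qed

end

lemma deform_in_inflated_points:
  assumes y: "y \<in> inflated_points" and s: "0 \<le> s" "s \<le> 1"
  shows "deform s y \<in> inflated_points"
proof -
  have tz: "cone_point (fst y) (snd y)" "sum (fst y) V = 1" using inflated_pointsD[OF y] by auto
  have "sum (fst y) V \<noteq> 0" using tz(2) by simp
  then obtain v where "v \<in> V" "fst y v \<noteq> 0" by (rule sum.not_neutral_contains_not_neutral)
  then have "0 < sum (deform_t s (fst y)) V"
    using deform_mass_pos[OF s, where t = "fst y"] cone_pointD(1)[OF tz(1)] by blast
  then show ?thesis
    unfolding deform_def
    using inflated_points_normalize cone_point_deform[OF s, where t = "fst y"] cone_pointD(1)[OF tz(1)] tz(1)
    by blast
qed

lemma deform_0:
  assumes y: "y \<in> inflated_points"
  shows "deform 0 y = y"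
proof -
  have tz: "cone_point (fst y) (snd y)" "sum (fst y) V = 1" using inflated_pointsD[OF y] by auto
  note t = cone_pointD[OF tz(1)]
  have deform_t_0: "deform_t 0 (fst y) v = fst y v" for v
    using t(1)[of v] t(1)[of "centre v"] t(2)[of v] unfolding deform_t_def by (auto simp: max_def min_def)
  have "deform_z 0 (fst y) (snd y) b = snd y b" for b
  proof (cases "leaf b")
    case True
    then show ?thesis using clamp_eq_self[OF t(3)[OF True]] unfolding deform_z_def deform_t_0 by simp
  next
    case False
    then show ?thesis using t(4) unfolding deform_z_def by simp
  qed
  then show ?thesis unfolding deform_def deform_t_0 using tz(2) by simp
qed

lemma lift_t_divide:
  assumes c: "0 < c"
  shows "lift_t (\<lambda>v. u v / c) w = lift_t u w / c"
proof -
  have "leaf_mass (\<lambda>v. u v / c) a = leaf_mass u a / c" for a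
    unfolding leaf_mass_def using c by (simp add: sum_divide_distrib)
  moreover have max_divide: "max 0 (r / c) = max 0 r / c" for r
    using c by (simp add: max_divide_distrib_right)
  ultimately show ?thesis
    unfolding lift_t_def using c by (auto simp: max_divide[symmetric] diff_divide_distrib add_divide_distrib)
qed

lemma lift_z_divide:
  assumes c: "0 < c"
  shows "lift_z (\<lambda>v. u v / c) w = lift_z u w / c"
proof -
  have "min (lift_t u (centre w) / c) (lift_t u w / c) = min (lift_t u (centre w)) (lift_t u w) / c"
    using c by (simp add: min_divide_distrib_right)
  then show ?thesis unfolding lift_z_def lift_t_divide[OF c] using clamp_divide[OF c] by simp
qed

lemma from_sphere_divide:
  assumes c: "0 < c"
  shows "from_sphere (\<lambda>v. u v / c) = from_sphere u"
proof -
  have "sum (lift_t (\<lambda>v. u v / c)) V = sum (lift_t u) V / c"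
    unfolding lift_t_divide[OF c] by (simp add: sum_divide_distrib)
  then show ?thesis unfolding from_sphere_def lift_t_divide[OF c] lift_z_divide[OF c] using c by simp
qed

lemma centre_star_vector:
  assumes tz: "cone_point (fst y) (snd y)" and a: "a \<in> V" "centre a = a"
  shows "star_vector y a + leaf_mass (star_vector y) a = fst y a - leaf_excess (fst y) a"
proof -
  have "leaf_mass (star_vector y) a = (\<Sum>b\<in>leaves a. min (fst y a) (fst y b))"
    unfolding leaf_mass_def
  proof (rule sum.cong[OF refl])
    fix b assume "b \<in> leaves a"
    then have "leaf b" "centre b = a" using in_leavesD by auto
    then show "\<bar>star_vector y b\<bar> = min (fst y a) (fst y b)"
      using cone_pointD(3)[OF tz] leafD unfolding star_vector_def by auto
  qed
  moreover have "sum (fst y) (leaves a) - (\<Sum>b\<in>leaves a. min (fst y a) (fst y b)) = leaf_excess (fst y) a"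
    unfolding leaf_excess_def sum_subtractf[symmetric] by (rule sum.cong) (auto simp: max_def min_def)
  ultimately show ?thesis using a by (simp add: star_vector_def)
qed

lemma lift_t_star_vector:
  assumes tz: "cone_point (fst y) (snd y)"
  shows "lift_t (star_vector y) v = deform_t 1 (fst y) v"
proof (cases "v \<in> V \<and> centre v = v")
  case True
  then show ?thesis using centre_star_vector[OF tz] by (simp add: lift_t_def deform_t_def)
next
  case not_centre: False
  show ?thesis
  proof (cases "leaf v")
    case True
    have c: "centre v \<in> V" "centre (centre v) = centre v" using centre_of_leaf[OF True] by auto
    have "\<bar>star_vector y v\<bar> = min (fst y (centre v)) (fst y v)"
      using True cone_pointD(3)[OF tz] leafD unfolding star_vector_def by auto
    moreover have "- star_vector y (centre v) - leaf_mass (star_vector y) (centre v) =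
        leaf_excess (fst y) (centre v) - fst y (centre v)"
      using centre_star_vector[OF tz c] by linarith
    ultimately show ?thesis using True by (simp add: lift_t_leaf deform_t_leaf)
  next
    case False
    then show ?thesis using not_centre by (simp add: lift_t_def deform_t_def leaf_def)
  qed
qed

lemma deform_1:
  assumes y: "y \<in> inflated_points"
  shows "deform 1 y = from_sphere (to_sphere y)"
proof -
  have tz: "cone_point (fst y) (snd y)" using inflated_pointsD[OF y] by auto
  have "0 < sqrt (sqnorm V (star_vector y))"
    using star_vector_nonzero[OF y] sqnorm_pos_iff[OF finite_V] by simp
  then have "from_sphere (to_sphere y) = from_sphere (star_vector y)"
    unfolding to_sphere_def normalized_def by (rule from_sphere_divide)
  moreover have "lift_z (star_vector y) b = deform_z 1 (fst y) (snd y) b" for b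
    using leafD unfolding lift_z_def deform_z_def lift_t_star_vector[OF tz] by (simp add: star_vector_def)
  then have "deform 1 y = from_sphere (star_vector y)"
    unfolding from_sphere_def deform_def lift_t_star_vector[OF tz] by simp
  ultimately show ?thesis by simp
qed

lemma star_vector_divide:
  "0 < c \<Longrightarrow> star_vector (\<lambda>v. t v / c, \<lambda>v. z v / c) w = star_vector (t, z) w / c"
  unfolding star_vector_def by (simp add: sum_divide_distrib diff_divide_distrib)

lemma star_term_centre:
  assumes "a \<in> V" "centre a = a"
  shows "(u a)\<^sup>2 \<le> star_vector (lift_t u, lift_z u) a * u a"
proof -
  have "sum (lift_t u) (leaves a) = (\<Sum>b\<in>leaves a. \<bar>u b\<bar> + max 0 (- u a - leaf_mass u a))"
    using in_leavesD lift_t_leaf by (intro sum.cong) auto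
  then have "sum (lift_t u) (leaves a) = leaf_mass u a + real (card (leaves a)) * max 0 (- u a - leaf_mass u a)"
    unfolding leaf_mass_def by (simp add: sum.distrib)
  then have "star_vector (lift_t u, lift_z u) a =
      max 0 (u a + leaf_mass u a) - leaf_mass u a - real (card (leaves a)) * max 0 (- u a - leaf_mass u a)"
    unfolding star_vector_def using assms lift_t_centre[OF assms] by simp
  then show ?thesis
    using square_le_centre_term[OF leaf_mass_nonneg card_leaves_ge_1[OF assms], of "u a"]
    by (simp add: mult.commute)
qed

lemma star_term_leaf:
  assumes "leaf b"
  shows "star_vector (lift_t u, lift_z u) b * u b = u b * clamp (u b) (min (lift_t u (centre b)) (lift_t u b))"
  using assms leafD[OF assms] unfolding star_vector_def lift_z_def by (simp add: mult.commute)

lemma inner_star_vector_lift_pos: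
  assumes u: "u \<in> sphere_points V"
  shows "0 < (\<Sum>v\<in>V. star_vector (lift_t u, lift_z u) v * u v)"
proof -
  have nonneg: "0 \<le> star_vector (lift_t u, lift_z u) v * u v" if "v \<in> V" for v
  proof (cases "centre v = v")
    case True
    then show ?thesis using star_term_centre[OF that True, of u] by (meson order_trans zero_le_power2)
  next
    case False
    then have "leaf v" using that unfolding leaf_def by simp
    have "0 \<le> u v * clamp (u v) (min (lift_t u (centre v)) (lift_t u v))"
      by (rule mult_clamp_nonneg) (simp add: lift_t_nonneg)
    then show ?thesis unfolding star_term_leaf[OF \<open>leaf v\<close>] .
  qed
  have "\<exists>v\<in>V. 0 < star_vector (lift_t u, lift_z u) v * u v"
  proof (cases "\<exists>a\<in>V. centre a = a \<and> u a \<noteq> 0")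
    case True
    then obtain a where a: "a \<in> V" "centre a = a" "u a \<noteq> 0" by blast
    then have "0 < (u a)\<^sup>2" by simp
    then show ?thesis using star_term_centre[OF a(1,2), of u] a(1) by (meson less_le_trans)
  next
    case False
    obtain v where v: "v \<in> V" "u v \<noteq> 0" using sphere_points_nonzero[OF finite_V u] by blast
    then have b: "leaf v" using False unfolding leaf_def by auto
    define a where "a = centre v"
    have a: "a \<in> V" "centre a = a" "u a = 0" unfolding a_def using centre_of_leaf[OF b] False by auto
    have "\<bar>u v\<bar> \<le> leaf_mass u a"
      unfolding leaf_mass_def a_def by (intro member_le_sum finite_leaves leaf_in_leaves[OF b]) auto
    then have "0 < min (lift_t u a) (lift_t u v)"
      using v(2) lift_t_centre[OF a(1,2)] lift_t_leaf[OF b] a(3) leaf_mass_nonneg[of u a]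
      unfolding a_def[symmetric] by simp
    then have "0 < star_vector (lift_t u, lift_z u) v * u v"
      unfolding star_term_leaf[OF b] a_def using v(2) by (rule mult_clamp_pos)
    then show ?thesis using v(1) by blast
  qed
  then obtain v where "v \<in> V" "0 < star_vector (lift_t u, lift_z u) v * u v" by blast
  then show ?thesis using nonneg by (intro sum_pos2[OF finite_V])
qed

lemma inner_to_sphere_from_sphere_pos:
  assumes u: "u \<in> sphere_points V"
  shows "0 < (\<Sum>v\<in>V. to_sphere (from_sphere u) v * u v)"
proof -
  define M where "M = sum (lift_t u) V"
  define k where "k = sqrt (sqnorm V (star_vector (from_sphere u)))"
  have M: "0 < M" unfolding M_def using lift_mass_pos[OF u] .
  have k: "0 < k"
    unfolding k_def using star_vector_nonzero[OF from_sphere_in_inflated_points[OF u]] sqnorm_pos_iff[OF finite_V]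
    by simp
  have star_from_sphere: "star_vector (from_sphere u) v = star_vector (lift_t u, lift_z u) v / M" for v
    unfolding from_sphere_def M_def[symmetric] by (rule star_vector_divide[OF M])
  have "to_sphere (from_sphere u) v = star_vector (lift_t u, lift_z u) v / (M * k)" for v
    unfolding to_sphere_def normalized_def k_def[symmetric] star_from_sphere by simp
  then have "(\<Sum>v\<in>V. to_sphere (from_sphere u) v * u v) =
             (\<Sum>v\<in>V. star_vector (lift_t u, lift_z u) v * u v) / (M * k)"
    by (simp add: sum_divide_distrib)
  then show ?thesis using inner_star_vector_lift_pos[OF u] M k by simp
qed

context
  fixes T :: "'a topology" and f g :: "'a \<Rightarrow> 'v \<Rightarrow> real"
  assumes f: "\<And>v. continuous_map T euclideanreal (\<lambda>x. f x v)"
    and g: "\<And>v. continuous_map T euclideanreal (\<lambda>x. g x v)"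
begin

lemma continuous_map_leaf_mass: "continuous_map T euclideanreal (\<lambda>x. leaf_mass (f x) a)"
  unfolding leaf_mass_def by (intro continuous_map_sum finite_leaves continuous_map_real_abs f)

lemma continuous_map_lift_t: "continuous_map T euclideanreal (\<lambda>x. lift_t (f x) w)"
  unfolding lift_t_def
  by (cases "w \<in> V"; cases "centre w = w")
     (simp_all, (intro continuous_map_real_max continuous_map_add continuous_map_diff continuous_map_minus
        continuous_map_real_abs continuous_map_canonical_const continuous_map_leaf_mass f)+)

lemma continuous_map_lift_z: "continuous_map T euclideanreal (\<lambda>x. lift_z (f x) w)"
  unfolding lift_z_def
  by (cases "leaf w") (simp_all, intro continuous_map_clamp continuous_map_real_min continuous_map_lift_t f)

lemma continuous_map_star_vector: "continuous_map T euclideanreal (\<lambda>x. star_vector (f x, g x) w)"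
  unfolding star_vector_def
  by (cases "w \<in> V"; cases "centre w = w")
     (simp_all add: f g, (intro continuous_map_diff continuous_map_sum finite_leaves f)+)

lemma continuous_map_deform_t:
  assumes \<sigma>: "continuous_map T euclideanreal \<sigma>"
  shows "continuous_map T euclideanreal (\<lambda>x. deform_t (\<sigma> x) (f x) w)"
  unfolding deform_t_def leaf_excess_def
  by (cases "w \<in> V"; cases "centre w = w")
     (simp_all, (intro continuous_map_real_max continuous_map_real_min continuous_map_add continuous_map_diff
        continuous_map_real_mult continuous_map_canonical_const continuous_map_sum finite_leaves f \<sigma>)+)

lemma continuous_map_deform_z:
  assumes \<sigma>: "continuous_map T euclideanreal \<sigma>"
  shows "continuous_map T euclideanreal (\<lambda>x. deform_z (\<sigma> x) (f x) (g x) w)"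
  unfolding deform_z_def
  by (cases "leaf w") (simp_all add: g, intro continuous_map_clamp continuous_map_real_min
      continuous_map_deform_t \<sigma> g)

end

lemma continuous_map_to_sphere: "continuous_map inflated_simplex (sphere_top V) to_sphere"
proof (rule continuous_map_into_sphere_top)
  show "continuous_map inflated_simplex euclideanreal (\<lambda>y. to_sphere y v)" for v
    unfolding to_sphere_def
  proof (rule continuous_map_normalized[OF finite_V])
    show "continuous_map inflated_simplex euclideanreal (\<lambda>y. star_vector y w)" for w
      using continuous_map_star_vector[where T = inflated_simplex and f = "\<lambda>y. fst y" and g = "\<lambda>y. snd y",
          OF continuous_map_inflated_simplex_fst continuous_map_inflated_simplex_snd] by simp
    show "0 < sqnorm V (star_vector y)" if "y \<in> topspace inflated_simplex" for y
      using that star_vector_nonzero sqnorm_pos_iff[OF finite_V] by simp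
  qed
  show "to_sphere y \<in> sphere_points V" if "y \<in> topspace inflated_simplex" for y
    using that to_sphere_in_sphere_points by simp
qed

lemma continuous_map_from_sphere: "continuous_map (sphere_top V) inflated_simplex from_sphere"
proof (rule continuous_map_into_inflated_simplex)
  have mass: "sum (lift_t u) V \<noteq> 0" if "u \<in> topspace (sphere_top V)" for u
    using lift_mass_pos that by force
  show "continuous_map (sphere_top V) euclideanreal (\<lambda>u. fst (from_sphere u) v)" for v
    unfolding from_sphere_def fst_conv
    by (intro continuous_map_real_divide continuous_map_sum finite_V
        continuous_map_lift_t[OF continuous_map_sphere_top_projection continuous_map_sphere_top_projection]
        mass)
  show "continuous_map (sphere_top V) euclideanreal (\<lambda>u. snd (from_sphere u) v)" for v
    unfolding from_sphere_def snd_conv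
    by (intro continuous_map_real_divide continuous_map_sum finite_V
        continuous_map_lift_t[OF continuous_map_sphere_top_projection continuous_map_sphere_top_projection]
        continuous_map_lift_z[OF continuous_map_sphere_top_projection continuous_map_sphere_top_projection]
        mass)
  show "from_sphere u \<in> inflated_points" if "u \<in> topspace (sphere_top V)" for u
    using that from_sphere_in_inflated_points by simp
qed

lemma from_to_sphere_homotopic_id:
  "homotopic_with (\<lambda>_. True) inflated_simplex inflated_simplex (from_sphere \<circ> to_sphere) id"
proof (rule homotopic_with_trueI)
  let ?T = "prod_topology (top_of_set {0..1::real}) inflated_simplex"
  have param: "continuous_map ?T euclideanreal (\<lambda>z. 1 - fst z)"
    by (intro continuous_map_diff continuous_map_canonical_const
        continuous_map_into_fulltopology[OF continuous_map_fst])
  have fst_cont: "continuous_map ?T euclideanreal (\<lambda>z. fst (snd z) v)" for v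
    using continuous_map_compose[OF continuous_map_snd continuous_map_inflated_simplex_fst] by (simp add: o_def)
  have snd_cont: "continuous_map ?T euclideanreal (\<lambda>z. snd (snd z) v)" for v
    using continuous_map_compose[OF continuous_map_snd continuous_map_inflated_simplex_snd] by (simp add: o_def)
  have in_T: "0 \<le> 1 - fst z \<and> 1 - fst z \<le> 1 \<and> snd z \<in> inflated_points" if "z \<in> topspace ?T" for z
    using that by auto
  have mass: "sum (deform_t (1 - fst z) (fst (snd z))) V \<noteq> 0" if "z \<in> topspace ?T" for z
  proof
    assume "sum (deform_t (1 - fst z) (fst (snd z))) V = 0"
    then have "sum (fst (deform (1 - fst z) (snd z))) V = 0" by (simp add: deform_def)
    moreover have "sum (fst (deform (1 - fst z) (snd z))) V = 1"
      using inflated_pointsD(2) deform_in_inflated_points in_T[OF that] by blast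
    ultimately show False by simp
  qed
  show "continuous_map ?T inflated_simplex (\<lambda>z. deform (1 - fst z) (snd z))"
  proof (rule continuous_map_into_inflated_simplex)
    show "continuous_map ?T euclideanreal (\<lambda>z. fst (deform (1 - fst z) (snd z)) v)" for v
      unfolding deform_def fst_conv
      by (intro continuous_map_real_divide continuous_map_sum finite_V
          continuous_map_deform_t[OF fst_cont fst_cont param] mass)
    show "continuous_map ?T euclideanreal (\<lambda>z. snd (deform (1 - fst z) (snd z)) v)" for v
      unfolding deform_def snd_conv
      by (intro continuous_map_real_divide continuous_map_sum finite_V
          continuous_map_deform_t[OF fst_cont snd_cont param] continuous_map_deform_z[OF fst_cont snd_cont param]
          mass)
    show "deform (1 - fst z) (snd z) \<in> inflated_points" if "z \<in> topspace ?T" for z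
      using deform_in_inflated_points in_T[OF that] by blast
  qed
  show "deform (1 - fst (0, y)) (snd (0, y)) = (from_sphere \<circ> to_sphere) y"
    if "y \<in> topspace inflated_simplex" for y
    using deform_1 that by simp
  show "deform (1 - fst (1, y)) (snd (1, y)) = id y" if "y \<in> topspace inflated_simplex" for y
    using deform_0 that by simp
qed

lemma inflated_simplex_homotopy_equivalent_sphere:
  "inflated_simplex homotopy_equivalent_space sphere_top V"
  unfolding homotopy_equivalent_space_def
proof (intro exI conjI)
  show "homotopic_with (\<lambda>_. True) (sphere_top V) (sphere_top V) (to_sphere \<circ> from_sphere) id"
    using sphere_map_homotopic_id[OF finite_V continuous_map_compose[OF continuous_map_from_sphere
          continuous_map_to_sphere]] inner_to_sphere_from_sphere_pos by simp
qed (rule continuous_map_to_sphere continuous_map_from_sphere from_to_sphere_homotopic_id)+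

lemma realization_homotopy_equivalent_nsphere:
  assumes "V \<noteq> {}"
  shows "realization homotopy_equivalent_space nsphere (card V - 1)"
proof -
  have "realization homotopy_equivalent_space inflated_simplex"
    by (rule homeomorphic_imp_homotopy_equivalent_space[OF realization_homeomorphic_inflated_simplex])
  also have "inflated_simplex homotopy_equivalent_space sphere_top V"
    by (rule inflated_simplex_homotopy_equivalent_sphere)
  also have "sphere_top V homotopy_equivalent_space nsphere (card V - 1)"
    by (rule homeomorphic_imp_homotopy_equivalent_space[OF sphere_top_homeomorphic_nsphere[OF finite_V assms]])
  finally show ?thesis .
qed

lemma topspace_realization_empty:
  assumes "V = {}"
  shows "topspace realization = {}"
proof -
  have "cells = {}" using assms unfolding inflation_def by auto
  then have "supp x = {}" if "x \<in> topspace realization" for x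
    using realizationD(2)[OF that] by blast
  then show ?thesis using realizationD(4) by fastforce
qed

end

section \<open>Starry sky functions\<close>

abbreviation Gmu_component :: "'v set \<Rightarrow> ('v set \<Rightarrow> nat) \<Rightarrow> 'v \<Rightarrow> 'v set" where
  "Gmu_component V \<mu> v \<equiv> {w. (Gmu_adj V \<mu>)\<^sup>*\<^sup>* v w}"

definition is_star_centre :: "'v set \<Rightarrow> ('v set \<Rightarrow> nat) \<Rightarrow> 'v set \<Rightarrow> 'v \<Rightarrow> bool" where
  "is_star_centre V \<mu> C c \<longleftrightarrow> c \<in> C \<and> (\<forall>u\<in>C. \<forall>v\<in>C. Gmu_adj V \<mu> u v \<longleftrightarrow> u \<noteq> v \<and> (u = c \<or> v = c))"

definition star_centre :: "'v set \<Rightarrow> ('v set \<Rightarrow> nat) \<Rightarrow> 'v \<Rightarrow> 'v" where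
  "star_centre V \<mu> v = (SOME c. is_star_centre V \<mu> (Gmu_component V \<mu> v) c)"

lemma Gmu_component_subset: "v \<in> V \<Longrightarrow> Gmu_component V \<mu> v \<subseteq> V"
proof
  fix w assume v: "v \<in> V" and "w \<in> Gmu_component V \<mu> v"
  then have "(Gmu_adj V \<mu>)\<^sup>*\<^sup>* v w" by simp
  then show "w \<in> V" by (induction rule: rtranclp_induct) (use v in \<open>auto simp: Gmu_adj_def\<close>)
qed

lemma Gmu_component_eq:
  assumes "w \<in> Gmu_component V \<mu> v"
  shows "Gmu_component V \<mu> w = Gmu_component V \<mu> v"
proof -
  have "symp (Gmu_adj V \<mu>)" unfolding symp_def Gmu_adj_def by (auto simp: insert_commute)
  then have "(Gmu_adj V \<mu>)\<^sup>*\<^sup>* w v" using assms symp_rtranclp sympD by fastforce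
  then show ?thesis using assms by (auto intro: rtranclp_trans)
qed

context
  fixes V :: "'v set" and \<mu> :: "'v set \<Rightarrow> nat"
  assumes finite_V: "finite V" and positive: "\<forall>e\<in>pairs2 V. 1 \<le> \<mu> e" and starry: "starry_sky V \<mu>"
begin

lemma star_component:
  assumes "v \<in> V"
  shows "2 \<le> card (Gmu_component V \<mu> v)" "\<exists>c. is_star_centre V \<mu> (Gmu_component V \<mu> v) c"
proof -
  have "Gmu_component V \<mu> v \<in> Gmu_components V \<mu>"
    unfolding Gmu_components_def using assms by blast
  then have "is_star_component V \<mu> (Gmu_component V \<mu> v)"
    using starry unfolding starry_sky_def by blast
  then show "2 \<le> card (Gmu_component V \<mu> v)" "\<exists>c. is_star_centre V \<mu> (Gmu_component V \<mu> v) c"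
    unfolding is_star_component_def is_star_centre_def by blast+
qed

lemma star_centre_is_star_centre:
  "v \<in> V \<Longrightarrow> is_star_centre V \<mu> (Gmu_component V \<mu> v) (star_centre V \<mu> v)"
  unfolding star_centre_def using star_component(2) by (rule someI_ex)

lemma star_centre_eq: "w \<in> Gmu_component V \<mu> v \<Longrightarrow> star_centre V \<mu> w = star_centre V \<mu> v"
  unfolding star_centre_def using Gmu_component_eq by metis

lemma star_centre_has_leaf:
  assumes a: "a \<in> V" "star_centre V \<mu> a = a"
  shows "\<exists>b\<in>V. star_centre V \<mu> b = a \<and> b \<noteq> a"
proof -
  have "\<not> Gmu_component V \<mu> a \<subseteq> {a}"
  proof
    assume "Gmu_component V \<mu> a \<subseteq> {a}"
    then have "card (Gmu_component V \<mu> a) \<le> 1" using card_mono[of "{a}"] by fastforce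
    then show False using star_component(1)[OF a(1)] by simp
  qed
  then obtain b where b: "b \<in> Gmu_component V \<mu> a" "b \<noteq> a" by blast
  have "star_centre V \<mu> b = a" using star_centre_eq[OF b(1)] a(2) by simp
  moreover have "b \<in> V" using b(1) Gmu_component_subset[OF a(1)] by blast
  ultimately show ?thesis using b(2) by blast
qed

lemma multiplicity_gt_1_iff_spoke:
  assumes e: "e \<in> pairs2 V"
  shows "1 < \<mu> e \<longleftrightarrow> (\<exists>b\<in>V. star_centre V \<mu> b \<noteq> b \<and> e = {star_centre V \<mu> b, b})"
proof -
  obtain u w where uw: "e = {u, w}" "u \<noteq> w" "u \<in> V" "w \<in> V"
    using e unfolding pairs2_def by (auto simp: card_2_iff)
  show ?thesis
  proof
    assume "1 < \<mu> e"
    then have adj: "Gmu_adj V \<mu> u w" unfolding Gmu_adj_def using uw by simp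
    then have w: "w \<in> Gmu_component V \<mu> u" by simp
    have "u = star_centre V \<mu> u \<or> w = star_centre V \<mu> u"
      using star_centre_is_star_centre[OF uw(3)] adj w unfolding is_star_centre_def by blast
    then show "\<exists>b\<in>V. star_centre V \<mu> b \<noteq> b \<and> e = {star_centre V \<mu> b, b}"
    proof
      assume "u = star_centre V \<mu> u"
      then have "star_centre V \<mu> w = u" using star_centre_eq[OF w] by simp
      then show ?thesis using uw by (intro bexI[of _ w]) auto
    next
      assume "w = star_centre V \<mu> u"
      then show ?thesis using uw by (intro bexI[of _ u]) auto
    qed
  next
    assume "\<exists>b\<in>V. star_centre V \<mu> b \<noteq> b \<and> e = {star_centre V \<mu> b, b}"
    then obtain b where b: "b \<in> V" "star_centre V \<mu> b \<noteq> b" "e = {star_centre V \<mu> b, b}" by blast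
    then have "Gmu_adj V \<mu> (star_centre V \<mu> b) b"
      using star_centre_is_star_centre[OF b(1)] unfolding is_star_centre_def by auto
    then show "1 < \<mu> e" unfolding Gmu_adj_def using b(3) by simp
  qed
qed

lemma star_forest_star_centre: "star_forest V \<mu> (star_centre V \<mu>)"
proof
  show "finite V" by (rule finite_V)
  show "star_centre V \<mu> v \<in> V" if "v \<in> V" for v
    using star_centre_is_star_centre[OF that] Gmu_component_subset[OF that] unfolding is_star_centre_def by blast
  show "star_centre V \<mu> (star_centre V \<mu> v) = star_centre V \<mu> v" if "v \<in> V" for v
    using star_centre_is_star_centre[OF that] star_centre_eq unfolding is_star_centre_def by blast
  show "\<exists>b\<in>V. star_centre V \<mu> b = a \<and> b \<noteq> a" if "a \<in> V" "star_centre V \<mu> a = a" for a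
    using star_centre_has_leaf that by blast
  show "1 \<le> \<mu> e \<and> \<mu> e \<le> 2" if "e \<in> pairs2 V" for e
    using positive starry that unfolding starry_sky_def by blast
  show "1 < \<mu> e \<longleftrightarrow> (\<exists>b\<in>V. star_centre V \<mu> b \<noteq> b \<and> e = {star_centre V \<mu> b, b})" if "e \<in> pairs2 V" for e
    using multiplicity_gt_1_iff_spoke[OF that] .
qed

end

theorem lemma4p13:
  fixes V :: "'v set" and \<mu> :: "'v set \<Rightarrow> nat"
  assumes "finite V"
    and "\<forall>e\<in>pairs2 V. 1 \<le> \<mu> e"
    and "starry_sky V \<mu>"
  shows "topspace (order_complex_realization (inflation V \<mu>) inflation_less) = {} \<or>
         (\<exists>n. order_complex_realization (inflation V \<mu>) inflation_less
                homotopy_equivalent_space nsphere n)"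
proof -
  interpret star_forest V \<mu> "star_centre V \<mu>"
    using star_forest_star_centre[OF assms] .
  show ?thesis
    using topspace_realization_empty realization_homotopy_equivalent_nsphere by blast
qed

end
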